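(* Under the hypotheses of the following setting: $q$ a prime power, $\epsilon>0$, $p\ge2$ an integer, $m\le n$ positive integers, $Z$ a random vector in $\mathbb{F}_q^n$, $\mathcal{C}$ uniform over the set $\mathscr{C}$ of all $[n,n-m]_q$ linear codes with parity-check matrix $H$ (an $m\times n$ rank-$m$ matrix with kernel $\mathcal{C}$), and $m\le H_p(Z)-p-\log_q(1/\epsilon)$, we have $$\mathbb{E}_{\mathcal{C}\sim\mathscr{C}}\big[D_p(P_{HZ}\|P_{U_m})\big]\le\frac{p\,\epsilon}{(p-1)\ln q}$$ and $$\mathbb{E}_{\mathcal{C}\sim\mathscr{C}}\big\|q^mP_{HZ}-1\big\|_p\le 2^{1-1/p}\big((1+\epsilon)^p-1\big)^{1/p}.$$
   Context: $H_p(Z)=\frac{1}{1-p}\log_q\sum_xP_Z(x)^p$. $D_p(P\|Q)=\frac{1}{p-1}\log_q\sum_xP(x)^pQ(x)^{-(p-1)}$. $P_{U_m}$ is the uniform distribution on $\mathbb{F}_q^m$; $P_{HZ}$ is the distribution of $HZ$ for fixed $\mathcal{C}$. For $f:\mathbb{F}_q^m\to\mathbb{R}$, $\|f\|_p=\big(q^{-m}\sum_x|f(x)|^p\big)^{1/p}$. *)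

theory Defs
  imports "HOL-Probability.Probability"
begin

text \<open>Linear codes of length n = CARD('n) and dimension n - m over the finite field 'a,
  i.e. subspaces of 'a^'n with q^(n-m) elements, q = CARD('a).\<close>
definition linear_codes :: "nat \<Rightarrow> ('a::{finite,field} ^ 'n) set set" where
  "linear_codes m = {C. (0::'a^'n) \<in> C \<and> (\<forall>x\<in>C. \<forall>y\<in>C. x + y \<in> C)
      \<and> (\<forall>c::'a. \<forall>x\<in>C. (\<chi> i. c * x $ i) \<in> C)
      \<and> card C = CARD('a) ^ (CARD('n) - m)}"

definition is_parity_check :: "('a::{finite,field}) ^ 'n ^ 'm \<Rightarrow> ('a ^ 'n) set \<Rightarrow> bool" where
  "is_parity_check H C \<longleftrightarrow> range (\<lambda>x. H *v x) = UNIV \<and> {x. H *v x = 0} = C"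

definition parity_check :: "('a::{finite,field} ^ 'n) set \<Rightarrow> 'a ^ 'n ^ 'm" where
  "parity_check C = (SOME H. is_parity_check H C)"

definition renyi_entropy :: "real \<Rightarrow> real \<Rightarrow> 'b::finite pmf \<Rightarrow> real" where
  "renyi_entropy q p Z = 1 / (1 - p) * log q (\<Sum>x\<in>UNIV. pmf Z x powr p)"

definition renyi_div :: "real \<Rightarrow> real \<Rightarrow> 'b::finite pmf \<Rightarrow> 'b pmf \<Rightarrow> real" where
  "renyi_div q p P Q = 1 / (p - 1) * log q (\<Sum>x\<in>UNIV. pmf P x powr p * pmf Q x powr (-(p - 1)))"

definition pnorm :: "real \<Rightarrow> ('b::finite \<Rightarrow> real) \<Rightarrow> real" where
  "pnorm p f = ((1 / real CARD('b)) * (\<Sum>x\<in>UNIV. \<bar>f x\<bar> powr p)) powr (1 / p)"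

definition syndrome_dist :: "('a::{finite,field}) ^ 'n ^ 'm \<Rightarrow> ('a ^ 'n) pmf \<Rightarrow> ('a ^ 'm) pmf" where
  "syndrome_dist H Z = map_pmf (\<lambda>z. H *v z) Z"

end

theory Submission
  imports Defs
begin

(* Write S_C = q^(m(p-1)) \<Sum>_s P_HZ(s)^p, so that D_p(P_HZ\<parallel>P_U) = log_q S_C / (p-1) and
   \<parallel>q^m P_HZ - 1\<parallel>_p^p \<le> S_C - 1.  Expanding the p-th power, q^(-m(p-1)) S_C is the probability that p
   independent copies z_0, ..., z_(p-1) of Z have all differences z_i - z_0 in C.  A uniformly random
   code contains vectors spanning an r-dimensional space with probability at most q^(-mr).  Hence,
   bounding q^m by 1 + q^m at every index whose difference lies in the span of the earlier ones and
   expanding the product, the average of S_C is at most the sum over the sets T of such indices of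
   q^(m|T|) times the probability that the coordinates in T lie in the span of the others.
   Conditioning on the others and applying Young's inequality bounds that probability by
   (q^p G)^|T|, where G^(p-1) = \<Sum> P_Z^p, so the average is at most (1 + q^(m+p) G)^(p-1), and the rate
   hypothesis says exactly q^(m+p) G \<le> \<epsilon>.  Jensen's inequality for ln and for x^(1/p) turns this
   bound on the average of S_C into the two claims. *)

lemma powr_le_tangent:
  fixes a \<theta> :: real
  assumes "0 \<le> a" "0 < \<theta>" "\<theta> \<le> 1"
  shows "a powr \<theta> \<le> \<theta> * a + (1 - \<theta>)"
proof (cases "a = 0 \<or> \<theta> = 1")
  case True
  then show ?thesis using assms by auto
next
  case False
  have "a powr \<theta> * 1 powr (1 - \<theta>) \<le> \<theta> * a + (1 - \<theta>) * 1"
    using assms False by (intro Youngs_inequality_0) auto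
  then show ?thesis by simp
qed

lemma mult_power_le_Young:
  fixes x y :: real
  assumes "0 \<le> x" "0 \<le> y"
  shows "x * y ^ t \<le> (x ^ (t+1) + real t * y ^ (t+1)) / real (t+1)"
proof (cases "x = 0 \<or> y = 0 \<or> t = 0")
  case True
  then show ?thesis using assms by (cases t) auto
next
  case False
  then have x: "x > 0" and y: "y > 0" and t: "t > 0" using assms by auto
  have root: "(u ^ (t+1)) powr (real k / real (t+1)) = u ^ k" if "u > 0" for u :: real and k
  proof -
    have "(u ^ (t+1)) powr (real k / real (t+1)) = (u powr real (t+1)) powr (real k / real (t+1))"
      using that by (simp only: powr_realpow)
    also have "\<dots> = u powr real k" by (simp add: powr_powr)
    finally show ?thesis using that by (simp add: powr_realpow)
  qed
  have "(x ^ (t+1)) powr (1 / real (t+1)) * (y ^ (t+1)) powr (real t / real (t+1))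
        \<le> (1 / real (t+1)) * x ^ (t+1) + (real t / real (t+1)) * y ^ (t+1)"
    using x y t by (intro Youngs_inequality_0) (auto simp: field_simps)
  then show ?thesis
    using root[OF x, of 1] root[OF y, of t] by (simp add: add_divide_distrib)
qed

lemma chebyshev_sum_power:
  fixes f :: "'b \<Rightarrow> real"
  assumes "finite S" "\<And>x. x \<in> S \<Longrightarrow> f x \<ge> 0"
  shows "(\<Sum>x\<in>S. f x) * (\<Sum>x\<in>S. f x ^ t) \<le> real (card S) * (\<Sum>x\<in>S. f x ^ Suc t)"
proof -
  have "0 \<le> (\<Sum>i\<in>S. \<Sum>j\<in>S. (f i - f j) * (f i ^ t - f j ^ t))"
  proof (intro sum_nonneg)
    fix i j assume "i \<in> S" "j \<in> S"
    then have "f i \<ge> 0" "f j \<ge> 0" using assms by auto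
    then show "0 \<le> (f i - f j) * (f i ^ t - f j ^ t)"
      by (cases "f i \<le> f j") (auto intro: mult_nonpos_nonpos simp: power_mono)
  qed
  also have "(\<Sum>i\<in>S. \<Sum>j\<in>S. (f i - f j) * (f i ^ t - f j ^ t))
      = (\<Sum>i\<in>S. \<Sum>j\<in>S. f i ^ Suc t + f j ^ Suc t - f i * f j ^ t - f j * f i ^ t)"
    by (intro sum.cong refl) (simp add: algebra_simps)
  also have "\<dots> = 2 * (real (card S) * (\<Sum>x\<in>S. f x ^ Suc t)) - 2 * ((\<Sum>x\<in>S. f x) * (\<Sum>x\<in>S. f x ^ t))"
    by (simp add: sum.distrib sum_subtractf sum_distrib_left sum_distrib_right
        sum.swap[of "\<lambda>i j. f j * f i ^ t"] algebra_simps)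
  finally show ?thesis by simp
qed

lemma power_sum_le_card_sum_power:
  fixes f :: "'b \<Rightarrow> real"
  assumes "finite S" "\<And>x. x \<in> S \<Longrightarrow> f x \<ge> 0" "t \<ge> 1"
  shows "(\<Sum>x\<in>S. f x) ^ t \<le> real (card S) ^ (t - 1) * (\<Sum>x\<in>S. f x ^ t)"
  using assms(3)
proof (induction t rule: dec_induct)
  case base
  then show ?case by simp
next
  case (step t)
  have "(\<Sum>x\<in>S. f x) ^ Suc t = (\<Sum>x\<in>S. f x) * (\<Sum>x\<in>S. f x) ^ t" by simp
  also have "\<dots> \<le> (\<Sum>x\<in>S. f x) * (real (card S) ^ (t - 1) * (\<Sum>x\<in>S. f x ^ t))"
    using step.IH assms by (intro mult_left_mono sum_nonneg) auto
  also have "\<dots> = real (card S) ^ (t - 1) * ((\<Sum>x\<in>S. f x) * (\<Sum>x\<in>S. f x ^ t))" by simp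
  also have "\<dots> \<le> real (card S) ^ (t - 1) * (real (card S) * (\<Sum>x\<in>S. f x ^ Suc t))"
    using chebyshev_sum_power[OF assms(1,2)] by (intro mult_left_mono) auto
  also have "\<dots> = real (card S) ^ (Suc t - 1) * (\<Sum>x\<in>S. f x ^ Suc t)"
    using step.hyps by (cases t) auto
  finally show ?case .
qed

lemma one_plus_power_ge:
  fixes u :: real
  assumes "u \<ge> 0" "p \<ge> 2"
  shows "1 + real p * u + u ^ p \<le> (1 + u) ^ p"
  using assms(2)
proof (induction p rule: dec_induct)
  case base
  then show ?case by (simp add: power2_eq_square algebra_simps)
next
  case (step p)
  have "1 + real (Suc p) * u + u ^ Suc p \<le> (1 + u) * (1 + real p * u + u ^ p)"
    using assms(1) by (simp add: algebra_simps)
  also have "\<dots> \<le> (1 + u) ^ Suc p"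
    using step.IH assms(1) by simp
  finally show ?case .
qed

lemma power_le_one_minus_power:
  fixes y :: real
  assumes y: "0 \<le> y" "y \<le> 1" and "p \<ge> 2"
  shows "y ^ p \<le> (1 - y) ^ p - 1 + real p * y"
  using assms(3)
proof (induction p rule: dec_induct)
  case base
  then show ?case by (simp add: power2_eq_square algebra_simps)
next
  case (step p)
  have "0 \<le> y ^ p * (1 - 2 * y) + real p * y ^ 2"
  proof (cases "y \<le> 1/2")
    case True
    then show ?thesis using y by (intro add_nonneg_nonneg mult_nonneg_nonneg) auto
  next
    case False
    have "y ^ p \<le> y ^ 2" using y step.hyps by (intro power_decreasing) auto
    moreover have "y * y ^ p \<le> y ^ p" using mult_right_mono[of y 1 "y ^ p"] y by simp
    moreover have "y ^ 2 \<le> real p * y ^ 2" using step.hyps by (simp add: mult_le_cancel_right1)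
    ultimately show ?thesis by (simp add: algebra_simps)
  qed
  then have "y ^ Suc p \<le> (1 - y) * (y ^ p + 1 - real p * y) - 1 + real (Suc p) * y"
    by (simp add: algebra_simps power2_eq_square)
  also have "(1 - y) * (y ^ p + 1 - real p * y) \<le> (1 - y) ^ Suc p"
    using step.IH y by (simp add: mult_left_mono)
  finally show ?case by simp
qed

lemma abs_diff_one_power_le:
  fixes x :: real
  assumes "x \<ge> 0" "p \<ge> 2"
  shows "\<bar>x - 1\<bar> ^ p \<le> x ^ p - 1 - real p * (x - 1)"
proof (cases "x \<ge> 1")
  case True
  then show ?thesis using one_plus_power_ge[of "x - 1" p] assms by simp
next
  case False
  then show ?thesis
    using power_le_one_minus_power[of "1 - x" p] assms by (simp add: algebra_simps)
qed

lemma moment_le_collision_powr: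
  fixes P :: "'b::finite \<Rightarrow> real"
  assumes P0: "\<And>y. P y \<ge> 0" and P1: "(\<Sum>y\<in>UNIV. P y) = 1" and t: "1 \<le> t" "t \<le> p - 1"
  shows "(\<Sum>y\<in>UNIV. P y ^ (t+1)) \<le> ((\<Sum>y\<in>UNIV. P y ^ p) powr (1 / (real p - 1))) ^ t"
proof -
  define M where "M = (\<Sum>y\<in>UNIV. P y ^ p)"
  define \<theta> where "\<theta> = real t / (real p - 1)"
  have p2: "p \<ge> 2" and pr: "real p - 1 = real (p - 1)" using t by auto
  have \<theta>: "0 < \<theta>" "\<theta> \<le> 1" unfolding \<theta>_def using t pr by auto
  have "\<exists>y. P y \<noteq> 0" using P1 by (metis (mono_tags) sum.neutral zero_neq_one)
  then obtain y0 where "P y0 > 0" using P0 by (metis less_eq_real_def)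
  then have M: "M > 0" unfolding M_def using P0 by (intro sum_pos2[of _ y0]) auto
  have M_eq: "M = (\<Sum>y\<in>UNIV. P y * P y ^ (p - 1))"
    unfolding M_def using p2 by (intro sum.cong refl) (simp flip: power_Suc)
  have power_eq: "P y ^ (t+1) = P y * M powr \<theta> * ((P y ^ (p - 1)) / M) powr \<theta>" for y
  proof (cases "P y = 0")
    case False
    then have "P y > 0" using P0[of y] by linarith
    then have "(P y ^ (p - 1)) powr \<theta> = (P y powr real (p - 1)) powr \<theta>"
      by (simp add: powr_realpow)
    also have "\<dots> = P y powr real t"
      unfolding powr_powr \<theta>_def using pr p2 by simp
    also have "\<dots> = P y ^ t" using \<open>P y > 0\<close> by (simp add: powr_realpow)
    finally have "(P y ^ (p - 1)) powr \<theta> = P y ^ t" .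
    then show ?thesis using M by (simp add: powr_divide)
  qed simp
  \<comment> \<open>the tangent line of x \<mapsto> x powr \<theta> at x = 1, applied to x = P y ^ (p - 1) / M\<close>
  have "(\<Sum>y\<in>UNIV. P y ^ (t+1))
      \<le> (\<Sum>y\<in>UNIV. P y * M powr \<theta> * (\<theta> * ((P y ^ (p - 1)) / M) + (1 - \<theta>)))"
    unfolding power_eq using P0 M \<theta> by (intro sum_mono mult_left_mono powr_le_tangent) auto
  also have "\<dots> = (\<Sum>y\<in>UNIV. M powr \<theta> * \<theta> / M * (P y * P y ^ (p - 1)) + M powr \<theta> * (1 - \<theta>) * P y)"
    using M by (intro sum.cong refl) (simp add: field_simps)
  also have "\<dots> = M powr \<theta> * \<theta> / M * (\<Sum>y\<in>UNIV. P y * P y ^ (p - 1)) + M powr \<theta> * (1 - \<theta>) * (\<Sum>y\<in>UNIV. P y)"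
    by (simp add: sum.distrib sum_distrib_left)
  also have "\<dots> = M powr \<theta>" unfolding M_eq[symmetric] P1 using M by (simp add: field_simps)
  also have "\<dots> = (M powr (1 / (real p - 1))) ^ t"
    using M by (simp add: powr_power \<theta>_def)
  finally show ?thesis unfolding M_def .
qed

lemma sum_ln_le_card_ln_mean:
  fixes S :: "'b \<Rightarrow> real"
  assumes "finite L" "L \<noteq> {}" "\<And>C. C \<in> L \<Longrightarrow> S C > 0"
  shows "(\<Sum>C\<in>L. ln (S C)) \<le> real (card L) * ln ((\<Sum>C\<in>L. S C) / real (card L))"
proof -
  define N where "N = real (card L)"
  have N: "N > 0" unfolding N_def using assms by (simp add: card_gt_0_iff)
  define A where "A = (\<Sum>C\<in>L. S C) / N"
  have A: "A > 0" unfolding A_def using assms N by (intro divide_pos_pos sum_pos) auto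
  have "ln (S C) \<le> ln A + (S C / A - 1)" if "C \<in> L" for C
    using ln_le_minus_one[of "S C / A"] assms(3)[OF that] A by (simp add: ln_div)
  then have "(\<Sum>C\<in>L. ln (S C)) \<le> (\<Sum>C\<in>L. ln A + (S C / A - 1))" by (rule sum_mono)
  also have "\<dots> = N * ln A + ((\<Sum>C\<in>L. S C) / A - N)"
    unfolding N_def by (simp add: sum.distrib sum_subtractf sum_divide_distrib)
  also have "(\<Sum>C\<in>L. S C) / A = N" unfolding A_def using N A A_def by (simp add: field_simps)
  finally show ?thesis unfolding A_def N_def by simp
qed

lemma sum_powr_le_card_mean_powr:
  fixes x :: "'b \<Rightarrow> real"
  assumes "finite L" "L \<noteq> {}" "\<And>C. C \<in> L \<Longrightarrow> x C \<ge> 0" "0 < \<theta>" "\<theta> \<le> 1"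
  shows "(\<Sum>C\<in>L. x C powr \<theta>) \<le> real (card L) * ((\<Sum>C\<in>L. x C) / real (card L)) powr \<theta>"
proof -
  define N where "N = real (card L)"
  have N: "N > 0" unfolding N_def using assms by (simp add: card_gt_0_iff)
  define a where "a = (\<Sum>C\<in>L. x C) / N"
  have "a \<ge> 0" unfolding a_def using assms N by (intro divide_nonneg_pos sum_nonneg) auto
  show ?thesis
  proof (cases "a = 0")
    case True
    then have "\<forall>C\<in>L. x C = 0"
      unfolding a_def using N sum_nonneg_eq_0_iff[OF assms(1)] assms(3) by auto
    then show ?thesis by simp
  next
    case False
    with \<open>a \<ge> 0\<close> have a: "a > 0" by simp
    have "x C powr \<theta> \<le> a powr \<theta> * (\<theta> * (x C / a) + (1 - \<theta>))" if "C \<in> L" for C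
    proof -
      have "x C powr \<theta> = a powr \<theta> * (x C / a) powr \<theta>" using a assms(3)[OF that]
        by (simp add: powr_divide)
      also have "\<dots> \<le> a powr \<theta> * (\<theta> * (x C / a) + (1 - \<theta>))"
        using a assms(3)[OF that] assms(4,5) by (intro mult_left_mono powr_le_tangent) auto
      finally show ?thesis .
    qed
    then have "(\<Sum>C\<in>L. x C powr \<theta>) \<le> (\<Sum>C\<in>L. a powr \<theta> * (\<theta> * (x C / a) + (1 - \<theta>)))"
      by (rule sum_mono)
    also have "\<dots> = (\<Sum>C\<in>L. (a powr \<theta> * \<theta> / a) * x C + a powr \<theta> * (1 - \<theta>))"
      using a by (intro sum.cong refl) (simp add: field_simps)
    also have "\<dots> = (a powr \<theta> * \<theta> / a) * (\<Sum>C\<in>L. x C) + N * (a powr \<theta> * (1 - \<theta>))"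
      unfolding N_def by (simp add: sum.distrib sum_distrib_left)
    also have "\<dots> = a powr \<theta> * (\<theta> * ((\<Sum>C\<in>L. x C) / a) + N * (1 - \<theta>))"
      by (simp add: algebra_simps)
    also have "(\<Sum>C\<in>L. x C) / a = N" unfolding a_def using N a a_def by (simp add: field_simps)
    finally show ?thesis unfolding a_def N_def by (simp add: algebra_simps)
  qed
qed

lemma divide_card_le:
  fixes x b :: real
  assumes "x \<le> real n * b" "0 \<le> b"
  shows "x / real n \<le> b"
  using assms by (cases "n = 0") (auto simp: field_simps)

section \<open>Sums over tuples\<close>

lemma sum_PiE_insert_UNIV:
  assumes "finite A" "k \<notin> A"
  shows "(\<Sum>z\<in>PiE (insert k A) (\<lambda>_. UNIV::'c::finite set). h z)
       = (\<Sum>v\<in>UNIV. \<Sum>x\<in>PiE A (\<lambda>_. UNIV). h (x(k := v)))"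
proof -
  have "(\<Sum>z\<in>PiE (insert k A) (\<lambda>_. UNIV::'c set). h z)
      = (\<Sum>(v,x)\<in>UNIV \<times> PiE A (\<lambda>_. UNIV). h (x(k := v)))"
    using assms
    by (intro sum.reindex_bij_witness[of _ "\<lambda>(y,g). g(k := y)" "\<lambda>g. (g k, g(k := undefined))"])
       (auto simp: PiE_def extensional_def)
  then show ?thesis by (simp add: sum.cartesian_product)
qed

lemma sum_PiE_Un_UNIV:
  assumes "finite A" "finite B" "A \<inter> B = {}"
  shows "(\<Sum>z\<in>PiE (A \<union> B) (\<lambda>_. UNIV::'c::finite set). h z)
       = (\<Sum>x\<in>PiE A (\<lambda>_. UNIV). \<Sum>y\<in>PiE B (\<lambda>_. UNIV). h (\<lambda>i. if i \<in> A then x i else y i))"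
proof -
  have restrict_merge: "(\<lambda>i. if i \<in> A then restrict a A i else restrict a B i) = a"
    if "a \<in> PiE (A \<union> B) (\<lambda>_. UNIV::'c set)" for a
    using that by (auto simp: fun_eq_iff PiE_def extensional_def)
  have "(\<Sum>z\<in>PiE (A \<union> B) (\<lambda>_. UNIV::'c set). h z)
      = (\<Sum>(x,y)\<in>PiE A (\<lambda>_. UNIV) \<times> PiE B (\<lambda>_. UNIV). h (\<lambda>i. if i \<in> A then x i else y i))"
    using assms
    by (intro sum.reindex_bij_witness[of _ "\<lambda>(x,y). (\<lambda>i. if i \<in> A then x i else y i)"
          "\<lambda>z. (restrict z A, restrict z B)"])
       (auto simp: restrict_merge, auto simp: PiE_def extensional_def fun_eq_iff)
  then show ?thesis by (simp add: sum.cartesian_product)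
qed

lemma sum_PiE_prod_eq_1:
  fixes P :: "'c::finite \<Rightarrow> real"
  assumes "finite A" "(\<Sum>y\<in>UNIV. P y) = 1"
  shows "(\<Sum>x\<in>PiE A (\<lambda>_. UNIV). \<Prod>i\<in>A. P (x i)) = 1"
  using prod_sum_PiE[OF assms(1), of "\<lambda>_. UNIV" "\<lambda>_ y. P y"] assms by simp

lemma prod_indicator:
  assumes "finite T"
  shows "(\<Prod>i\<in>T. if Q i then 1 else (0::real)) = (if \<forall>i\<in>T. Q i then 1 else 0)"
  using assms by (induction T rule: finite_induct) auto

lemma sum_indicator_eq_card:
  assumes "finite L"
  shows "(\<Sum>C\<in>L. if Q C then 1 else (0::real)) = real (card {C\<in>L. Q C})"
  using sum.inter_filter[OF assms, of "\<lambda>_. 1::real" Q] by simp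

lemma sum_card_filter_swap:
  assumes "finite A" "finite B"
  shows "(\<Sum>x\<in>A. card {y\<in>B. R x y}) = (\<Sum>y\<in>B. card {x\<in>A. R x y})"
proof -
  have "(\<Sum>x\<in>A. card {y\<in>B. R x y}) = (\<Sum>x\<in>A. \<Sum>y\<in>B. if R x y then 1 else (0::nat))"
    using assms by (intro sum.cong refl) (simp add: sum.If_cases Int_def conj_commute)
  also have "\<dots> = (\<Sum>y\<in>B. \<Sum>x\<in>A. if R x y then 1 else (0::nat))" by (rule sum.swap)
  also have "\<dots> = (\<Sum>y\<in>B. card {x\<in>A. R x y})"
    using assms by (intro sum.cong refl) (simp add: sum.If_cases Int_def conj_commute)
  finally show ?thesis .
qed

section \<open>Linear algebra over a finite field\<close>

lemma card_field_ge_2: "CARD('a::{finite,field}) \<ge> 2"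
proof -
  have "card {0::'a, 1} = 2" by simp
  moreover have "card {0::'a, 1} \<le> CARD('a)" by (rule card_mono) auto
  ultimately show ?thesis by simp
qed

lemma card_span_independent:
  fixes B :: "('a::{finite,field}^'n) set"
  assumes "vec.independent B"
  shows "card (vec.span B) = CARD('a) ^ card B"
proof -
  have fB: "finite B" using assms vec.finiteI_independent by blast
  let ?F = "\<lambda>u. \<Sum>v\<in>B. u v *s v"
  have "range ?F = ?F ` (PiE B (\<lambda>_. UNIV))"
  proof (intro equalityI subsetI)
    fix x assume "x \<in> range ?F"
    then obtain u where x: "x = ?F u" by auto
    have "x = ?F (restrict u B)" unfolding x by (intro sum.cong) auto
    moreover have "restrict u B \<in> PiE B (\<lambda>_. UNIV)" by auto
    ultimately show "x \<in> ?F ` (PiE B (\<lambda>_. UNIV))" by blast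
  qed auto
  then have span: "vec.span B = ?F ` (PiE B (\<lambda>_. UNIV))" using vec.span_finite[OF fB] by simp
  have "inj_on ?F (PiE B (\<lambda>_. UNIV))"
  proof (rule inj_onI)
    fix u u' assume u: "u \<in> PiE B (\<lambda>_. UNIV)" and u': "u' \<in> PiE B (\<lambda>_. UNIV)"
      and eq: "?F u = ?F u'"
    have "(\<Sum>v\<in>B. (u v - u' v) *s v) = ?F u - ?F u'"
      by (simp add: sum_subtractf vector_sub_rdistrib)
    with eq have zero: "(\<Sum>v\<in>B. (u v - u' v) *s v) = 0" by simp
    have ind: "\<forall>c. (\<Sum>v\<in>B. c v *s v) = 0 \<longrightarrow> (\<forall>v\<in>B. c v = 0)"
      using assms vec.independent_explicit by blast
    have "\<forall>v\<in>B. u v - u' v = 0" using ind[rule_format, OF zero] by blast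
    then show "u = u'" using u u' by (auto simp: PiE_def extensional_def fun_eq_iff)
  qed
  then have "card (vec.span B) = card (PiE B (\<lambda>_. UNIV::'a set))"
    unfolding span by (rule card_image)
  also have "\<dots> = CARD('a) ^ card B" using fB by (simp add: card_PiE)
  finally show ?thesis .
qed

lemma card_subspace_eq_power_dim:
  fixes S :: "('a::{finite,field}^'n) set"
  assumes "vec.subspace S"
  obtains B where "vec.independent B" "vec.span B = S" "card B = vec.dim S"
    "card S = CARD('a) ^ vec.dim S"
proof -
  obtain B where B: "B \<subseteq> S" "vec.independent B" "S \<subseteq> vec.span B" "card B = vec.dim S"
    using vec.basis_exists by blast
  have "vec.span B = S" using B assms vec.span_subspace by blast
  then show ?thesis using that B card_span_independent[OF B(2)] by auto
qed

lemma linear_codes_iff: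
  "C \<in> (linear_codes k :: ('a::{finite,field}^'n) set set) \<longleftrightarrow>
     vec.subspace C \<and> card C = CARD('a) ^ (CARD('n) - k)"
  unfolding linear_codes_def vec.subspace_def by (auto simp: vector_scalar_mult_def)

lemma finite_linear_codes: "finite (linear_codes k :: ('a::{finite,field}^'n) set set)"
  by (rule finite_subset[of _ "Pow UNIV"]) auto

lemma span_subset_linear_code_iff:
  assumes "C \<in> linear_codes k"
  shows "vec.span S \<subseteq> C \<longleftrightarrow> S \<subseteq> C"
proof
  assume "S \<subseteq> C"
  moreover have "vec.subspace C" using assms linear_codes_iff by blast
  ultimately show "vec.span S \<subseteq> C" by (rule vec.span_minimal)
qed (use vec.span_superset in blast)

lemma card_linear_map_fibre:
  fixes g :: "'a::{finite,field}^'n \<Rightarrow> 'a^'m"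
  assumes lin: "Vector_Spaces.linear (*s) (*s) g" and surj: "surj g"
  shows "CARD('a) ^ CARD('m) * card {x. g x = 0} = CARD('a) ^ CARD('n)"
proof -
  have fibre: "card {x. g x = y} = card {x. g x = 0}" for y
  proof -
    obtain x0 where x0: "g x0 = y" using surj by (metis UNIV_I image_iff)
    have "{x. g x = y} = (\<lambda>k. k + x0) ` {x. g x = 0}"
    proof (intro equalityI subsetI)
      fix x assume "x \<in> {x. g x = y}"
      then have "g (x - x0) = 0" using x0 vec.linear_diff[OF lin] by simp
      then show "x \<in> (\<lambda>k. k + x0) ` {x. g x = 0}" by (intro image_eqI[of _ _ "x - x0"]) auto
    qed (use vec.linear_add[OF lin] x0 in auto)
    moreover have "inj_on (\<lambda>k. k + x0) {x. g x = 0}" by (auto simp: inj_on_def)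
    ultimately show ?thesis by (simp add: card_image)
  qed
  have "CARD('a) ^ CARD('n) = card (UNIV :: ('a^'n) set)" by simp
  also have "\<dots> = (\<Sum>x\<in>(UNIV :: ('a^'n) set). \<Sum>y\<in>(UNIV :: ('a^'m) set). if g x = y then 1 else 0)"
    by (simp add: sum.delta')
  also have "\<dots> = (\<Sum>y\<in>(UNIV :: ('a^'m) set). card {x. g x = y})"
    by (subst sum.swap) (simp add: sum.If_cases)
  also have "\<dots> = (\<Sum>y\<in>(UNIV :: ('a^'m) set). card {x. g x = 0})" by (rule sum.cong[OF refl fibre])
  also have "\<dots> = CARD('a) ^ CARD('m) * card {x. g x = 0}" by simp
  finally show ?thesis by simp
qed

lemma parity_check_exists:
  fixes C :: "('a::{finite,field}^'n) set"
  assumes C: "C \<in> linear_codes CARD('m::finite)" and mn: "CARD('m) \<le> CARD('n)"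
  shows "\<exists>H :: 'a^'n^'m. is_parity_check H C"
proof -
  let ?q = "CARD('a)" and ?m = "CARD('m)" and ?n = "CARD('n)"
  have sub: "vec.subspace C" and cardC: "card C = ?q ^ (?n - ?m)" using C linear_codes_iff by blast+
  obtain B where B: "vec.independent B" "vec.span B = C" "card B = vec.dim C" "card C = ?q ^ vec.dim C"
    using card_subspace_eq_power_dim[OF sub] by metis
  have q2: "?q \<ge> 2" by (rule card_field_ge_2)
  have cB: "card B = ?n - ?m" using B(3,4) cardC q2 by (simp add: power_inject_exp)
  define E where "E = vec.extend_basis B"
  have E: "B \<subseteq> E" "vec.independent E" "vec.span E = UNIV"
    unfolding E_def using B(1) vec.extend_basis_superset vec.independent_extend_basis
      vec.span_extend_basis by auto
  have fE: "finite E" using E(2) vec.finiteI_independent by blast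
  have "card E = ?n"
    using vec.basis_card_eq_dim[of E UNIV] E vec.dim_UNIV card_cart_basis by auto
  then have cEB: "card (E - B) = card (cart_basis :: ('a^'m) set)"
    using cB E(1) fE mn by (simp add: card_Diff_subset finite_subset card_cart_basis)
  obtain h where h: "bij_betw h (E - B) (cart_basis :: ('a^'m) set)"
    using finite_same_card_bij[OF _ _ cEB] fE finite_cart_basis by blast
  define f where "f = (\<lambda>b. if b \<in> B then 0 else h b)"
  define g :: "'a^'n \<Rightarrow> 'a^'m" where "g = vec.construct E f"
  have lin: "Vector_Spaces.linear (*s) (*s) g" unfolding g_def by (rule vec.linear_construct[OF E(2)])
  have gE: "\<And>b. b \<in> E \<Longrightarrow> g b = f b" unfolding g_def by (rule vec.construct_basis[OF E(2)])
  have "cart_basis \<subseteq> f ` E"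
  proof
    fix y :: "'a^'m" assume "y \<in> cart_basis"
    then have "y \<in> h ` (E - B)" using h by (simp add: bij_betw_def)
    then obtain b where "b \<in> E - B" "h b = y" by blast
    then show "y \<in> f ` E" unfolding f_def by force
  qed
  then have "vec.span (cart_basis :: ('a^'m) set) \<subseteq> vec.span (f ` E)" by (rule vec.span_mono)
  then have surj: "surj g"
    unfolding g_def vec.range_construct_eq_span[OF E(2)] by auto
  have "B \<subseteq> {x. g x = 0}" using gE E(1) by (auto simp: f_def)
  then have kerC: "C \<subseteq> {x. g x = 0}"
    using vec.span_minimal[OF _ vec.linear_subspace_kernel[OF lin]] B(2) by blast
  have "?q ^ ?m * card {x. g x = 0} = ?q ^ ?m * ?q ^ (?n - ?m)"
    using card_linear_map_fibre[OF lin surj] mn by (simp add: power_add[symmetric])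
  then have "card {x. g x = 0} = card C" using q2 cardC by simp
  then have "{x. g x = 0} = C" using kerC by (intro card_subset_eq[symmetric]) auto
  then have "is_parity_check (matrix g) C"
    unfolding is_parity_check_def matrix_works[OF lin] using surj by simp
  then show ?thesis by blast
qed

lemma kernel_parity_check:
  fixes C :: "('a::{finite,field}^'n) set"
  assumes "C \<in> linear_codes CARD('m::finite)" "CARD('m) \<le> CARD('n)"
  shows "{x. (parity_check C :: 'a^'n^'m) *v x = 0} = C"
  using someI_ex[OF parity_check_exists[OF assms]]
  unfolding parity_check_def is_parity_check_def by blast

lemma span_combinations_superset:
  fixes g :: "nat \<Rightarrow> 'a::{finite,field}^'n"
  assumes "finite U"
  shows "vec.span (g ` U) \<subseteq> (\<lambda>c. \<Sum>j\<in>U. c j *s g j) ` PiE U (\<lambda>_. UNIV)"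
proof (rule vec.span_minimal)
  let ?R = "(\<lambda>c. \<Sum>j\<in>U. c j *s g j) ` PiE U (\<lambda>_. UNIV)"
  show "g ` U \<subseteq> ?R"
  proof
    fix x assume "x \<in> g ` U"
    then obtain j where j: "j \<in> U" "x = g j" by auto
    have "(\<Sum>i\<in>U. (\<lambda>i\<in>U. if i = j then 1 else 0) i *s g i) = (\<Sum>i\<in>U. if i = j then g i else 0)"
      by (intro sum.cong) auto
    also have "\<dots> = g j" using j assms by simp
    finally show "x \<in> ?R" using j by (intro image_eqI[of _ _ "\<lambda>i\<in>U. if i = j then 1 else 0"]) auto
  qed
  show "vec.subspace ?R"
    unfolding vec.subspace_def
  proof (intro conjI ballI allI)
    show "0 \<in> ?R" by (intro image_eqI[of _ _ "\<lambda>i\<in>U. 0"]) auto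
  next
    fix x y assume "x \<in> ?R" "y \<in> ?R"
    then obtain c1 c2 where c: "c1 \<in> PiE U (\<lambda>_. UNIV)" "c2 \<in> PiE U (\<lambda>_. UNIV)"
      "x = (\<Sum>j\<in>U. c1 j *s g j)" "y = (\<Sum>j\<in>U. c2 j *s g j)" by auto
    have "x + y = (\<Sum>j\<in>U. (\<lambda>i\<in>U. c1 i + c2 i) j *s g j)"
      unfolding c by (simp add: sum.distrib[symmetric] vec.scale_left_distrib)
    then show "x + y \<in> ?R" by (intro image_eqI[of _ _ "\<lambda>i\<in>U. c1 i + c2 i"]) auto
  next
    fix a x assume "x \<in> ?R"
    then obtain c1 where c: "c1 \<in> PiE U (\<lambda>_. UNIV)" "x = (\<Sum>j\<in>U. c1 j *s g j)" by auto
    have "a *s x = (\<Sum>j\<in>U. (\<lambda>i\<in>U. a * c1 i) j *s g j)"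
      unfolding c by (simp add: vec.scale_sum_right)
    then show "a *s x \<in> ?R" by (intro image_eqI[of _ _ "\<lambda>i\<in>U. a * c1 i"]) auto
  qed
qed

lemma span_earlier_imp_span_rest:
  fixes d :: "nat \<Rightarrow> 'a::{finite,field}^'n"
  assumes T: "T \<subseteq> {..<p}" and earlier: "\<forall>i\<in>T. d i \<in> vec.span (d ` {..<i})"
  shows "\<forall>i\<in>T. d i \<in> vec.span (d ` ({..<p} - T))"
proof -
  have "i \<in> T \<longrightarrow> d i \<in> vec.span (d ` ({..<p} - T))" for i
  proof (induction i rule: less_induct)
    case (less i)
    show ?case
    proof
      assume iT: "i \<in> T"
      have "d ` {..<i} \<subseteq> vec.span (d ` ({..<p} - T))"
      proof
        fix x assume "x \<in> d ` {..<i}"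
        then obtain j where j: "j < i" "x = d j" by auto
        show "x \<in> vec.span (d ` ({..<p} - T))"
        proof (cases "j \<in> T")
          case True
          then show ?thesis using less j by blast
        next
          case False
          then have "j \<in> {..<p} - T" using j iT T by auto
          then show ?thesis using j by (auto intro: vec.span_base)
        qed
      qed
      then have "vec.span (d ` {..<i}) \<subseteq> vec.span (d ` ({..<p} - T))"
        by (intro vec.span_minimal) auto
      then show "d i \<in> vec.span (d ` ({..<p} - T))" using earlier iT by blast
    qed
  qed
  then show ?thesis by blast
qed

section \<open>Counting codes through given vectors\<close>

lemma linear_automorphism_fixing_subspace:
  fixes W :: "('a::{finite,field}^'n) set"
  assumes W: "vec.subspace W" and v: "v \<notin> W" and w: "w \<notin> W"
  obtains g where "Vector_Spaces.linear (*s) (*s) g" "inj g" "\<And>x. x \<in> W \<Longrightarrow> g x = x" "g v = w"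
proof -
  obtain B where B: "vec.independent B" "vec.span B = W"
    using card_subspace_eq_power_dim[OF W] by metis
  have "B \<subseteq> W" using B(2) vec.span_superset by blast
  then have vB: "v \<notin> B" and wB: "w \<notin> B" using v w by auto
  have iv: "vec.independent (insert v B)" using B v by (intro vec.independent_insertI) auto
  have iw: "vec.independent (insert w B)" using B w by (intro vec.independent_insertI) auto
  define E1 where "E1 = vec.extend_basis (insert v B)"
  define E2 where "E2 = vec.extend_basis (insert w B)"
  have E1: "insert v B \<subseteq> E1" "vec.independent E1" "vec.span E1 = UNIV"
    unfolding E1_def using iv vec.extend_basis_superset vec.independent_extend_basis
      vec.span_extend_basis by auto
  have E2: "insert w B \<subseteq> E2" "vec.independent E2" "vec.span E2 = UNIV"
    unfolding E2_def using iw vec.extend_basis_superset vec.independent_extend_basis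
      vec.span_extend_basis by auto
  have fin: "finite E1" "finite E2" "finite B"
    using E1(2) E2(2) B(1) vec.finiteI_independent by blast+
  have "card E1 = card E2"
    using vec.basis_card_eq_dim[of E1 UNIV] vec.basis_card_eq_dim[of E2 UNIV] E1 E2 by auto
  then have "card (E1 - insert v B) = card (E2 - insert w B)"
    using E1(1) E2(1) fin vB wB by (simp add: card_Diff_subset finite_subset)
  then obtain h where h: "bij_betw h (E1 - insert v B) (E2 - insert w B)"
    using finite_same_card_bij[of "E1 - insert v B" "E2 - insert w B"] fin by auto
  define f where "f = (\<lambda>b. if b \<in> B then b else if b = v then w else h b)"
  define g :: "'a^'n \<Rightarrow> 'a^'n" where "g = vec.construct E1 f"
  have lin: "Vector_Spaces.linear (*s) (*s) g" unfolding g_def by (rule vec.linear_construct[OF E1(2)])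
  have gE: "\<And>b. b \<in> E1 \<Longrightarrow> g b = f b" unfolding g_def by (rule vec.construct_basis[OF E1(2)])
  have "E2 \<subseteq> f ` E1"
  proof
    fix y assume y: "y \<in> E2"
    show "y \<in> f ` E1"
    proof (cases "y \<in> insert w B")
      case True
      then show ?thesis using E1(1) vB unfolding f_def by (auto intro: image_eqI[of _ _ v] image_eqI[of _ _ y])
    next
      case False
      then have "y \<in> h ` (E1 - insert v B)" using y h by (simp add: bij_betw_def)
      then obtain b where "b \<in> E1 - insert v B" "h b = y" by blast
      then show ?thesis unfolding f_def by (intro image_eqI[of _ _ b]) auto
    qed
  qed
  then have "vec.span E2 \<subseteq> vec.span (f ` E1)" by (rule vec.span_mono)
  then have "surj g"
    unfolding g_def vec.range_construct_eq_span[OF E1(2)] using E2(3) by auto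
  then have "inj g" by (simp add: finite_UNIV_surj_inj)
  moreover have "g x = x" if "x \<in> W" for x
  proof -
    have "\<And>b. b \<in> B \<Longrightarrow> g b = mat 1 *v b" using gE E1(1) by (auto simp: f_def)
    then have "g x = mat 1 *v x"
      using vec.linear_eq_on[OF lin matrix_vector_mul_linear_gen] that B(2) by blast
    then show ?thesis by simp
  qed
  moreover have "g v = w" using gE[of v] E1(1) vB unfolding f_def by auto
  ultimately show ?thesis using that lin by blast
qed

lemma card_codes_containing_le:
  fixes W :: "('a::{finite,field}^'n) set"
  assumes W: "vec.subspace W" and v: "v \<notin> W" and w: "w \<notin> W"
  shows "card {C \<in> linear_codes k. W \<subseteq> C \<and> v \<in> C} \<le> card {C \<in> linear_codes k. W \<subseteq> C \<and> w \<in> C}"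
proof -
  obtain g where lin: "Vector_Spaces.linear (*s) (*s) g" and inj: "inj g"
    and fixes_W: "\<And>x. x \<in> W \<Longrightarrow> g x = x" and gv: "g v = w"
    using linear_automorphism_fixing_subspace[OF W v w] by blast
  let ?A = "{C \<in> linear_codes k. W \<subseteq> C \<and> v \<in> C}"
  let ?B = "{C \<in> linear_codes k. W \<subseteq> C \<and> w \<in> C} :: ('a^'n) set set"
  have "inj_on (image g) ?A" using inj by (auto simp: inj_on_def inj_image_eq_iff)
  moreover have "image g ` ?A \<subseteq> ?B"
  proof
    fix D assume "D \<in> image g ` ?A"
    then obtain C where C: "C \<in> linear_codes k" "W \<subseteq> C" "v \<in> C" and D: "D = g ` C" by blast
    have "vec.subspace C" "card C = CARD('a) ^ (CARD('n) - k)" using C(1) linear_codes_iff by blast+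
    then have "D \<in> linear_codes k"
      using vec.linear_subspace_image[OF lin] card_image[of g C] inj D
      by (auto simp: linear_codes_iff inj_on_def inj_def)
    moreover have "W \<subseteq> D" using C(2) fixes_W D by force
    moreover have "w \<in> D" using C(3) gv D by force
    ultimately show "D \<in> ?B" by blast
  qed
  moreover have "finite ?B" using finite_linear_codes by auto
  ultimately show ?thesis by (rule card_inj_on_le)
qed

text \<open>By symmetry every vector outside W lies in the same number of codes containing W; double
  counting the pairs (v, C) with v \<in> C - W then gives the factor q^k.\<close>

lemma card_codes_containing_new_vector:
  fixes W :: "('a::{finite,field}^'n) set"
  assumes W: "vec.subspace W" and w: "w \<notin> W" and k: "k \<le> CARD('n)"
  shows "CARD('a) ^ k * card {C \<in> linear_codes k. W \<subseteq> C \<and> w \<in> C}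
          \<le> card {C \<in> linear_codes k. W \<subseteq> C}"
proof -
  let ?q = "CARD('a)" and ?n = "CARD('n)"
  let ?LW = "{C \<in> linear_codes k. W \<subseteq> C} :: ('a^'n) set set"
  define Nw where "Nw = card {C \<in> ?LW. w \<in> C}"
  have eqw: "{C \<in> linear_codes k. W \<subseteq> C \<and> w \<in> C} = {C \<in> ?LW. w \<in> C}" by auto
  have Nv: "card {C \<in> ?LW. v \<in> C} = Nw" if "v \<notin> W" for v
  proof -
    have "{C \<in> ?LW. v \<in> C} = {C \<in> linear_codes k. W \<subseteq> C \<and> v \<in> C}" by auto
    then show ?thesis unfolding Nw_def eqw[symmetric]
      using card_codes_containing_le[OF W that w, of k] card_codes_containing_le[OF W w that, of k]
      by simp
  qed
  have cW: "card W < ?q ^ ?n"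
  proof -
    have "W \<subset> UNIV" using w by auto
    then have "card W < card (UNIV :: ('a^'n) set)" by (intro psubset_card_mono) auto
    then show ?thesis by (simp only: CARD_vec)
  qed
  have "card (-W) * Nw = (\<Sum>v\<in>-W. card {C \<in> ?LW. v \<in> C})"
    using Nv by simp
  also have "\<dots> = (\<Sum>C\<in>?LW. card {v \<in> -W. v \<in> C})"
    using finite_linear_codes by (intro sum_card_filter_swap) auto
  also have "\<dots> = (\<Sum>C\<in>?LW. ?q ^ (?n - k) - card W)"
  proof (intro sum.cong refl)
    fix C assume C: "C \<in> ?LW"
    have "{v \<in> -W. v \<in> C} = C - W" by auto
    then show "card {v \<in> -W. v \<in> C} = ?q ^ (?n - k) - card W"
      using C linear_codes_iff[of C k] by (simp add: card_Diff_subset finite_subset)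
  qed
  finally have eq1: "card (-W) * Nw = card ?LW * (?q ^ (?n - k) - card W)"
    by simp
  have "-W = UNIV - W" by auto
  then have "card (-W) = ?q ^ ?n - card W" by (simp add: card_Diff_subset)
  then have "?q ^ k * Nw * (?q ^ ?n - card W) = card ?LW * (?q ^ k * (?q ^ (?n - k) - card W))"
    using eq1 by (simp add: ac_simps)
  also have "?q ^ k * (?q ^ (?n - k) - card W) = ?q ^ ?n - ?q ^ k * card W"
    using k by (simp add: right_diff_distrib' power_add[symmetric])
  also have "\<dots> \<le> ?q ^ ?n - card W"
    by (intro diff_le_mono2) simp
  finally have "?q ^ k * Nw * (?q ^ ?n - card W) \<le> card ?LW * (?q ^ ?n - card W)"
    by (simp add: mult_left_mono)
  then have "?q ^ k * Nw \<le> card ?LW" using cW by simp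
  then show ?thesis unfolding Nw_def eqw .
qed

lemma card_codes_containing_seq:
  fixes d :: "nat \<Rightarrow> 'a::{finite,field}^'n"
  assumes k: "k \<le> CARD('n)"
  shows "real (card {C \<in> linear_codes k. \<forall>i<j. d i \<in> C})
          * (\<Prod>i<j. if d i \<in> vec.span (d ` {..<i}) then 1 else real CARD('a) ^ k)
         \<le> real (card (linear_codes k :: ('a^'n) set set))"
proof (induction j)
  case 0
  then show ?case by simp
next
  case (Suc j)
  let ?W = "vec.span (d ` {..<j})"
  let ?f = "\<lambda>i. if d i \<in> vec.span (d ` {..<i}) then 1 else real CARD('a) ^ k"
  let ?S0 = "{C \<in> linear_codes k. \<forall>i<j. d i \<in> C} :: ('a^'n) set set"
  let ?S1 = "{C \<in> linear_codes k. \<forall>i<Suc j. d i \<in> C} :: ('a^'n) set set"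
  have span: "(\<forall>i<j. d i \<in> C) \<longleftrightarrow> ?W \<subseteq> C" if "C \<in> linear_codes k" for C
    using span_subset_linear_code_iff[OF that, of "d ` {..<j}"] by auto
  have S0: "?S0 = {C \<in> linear_codes k. ?W \<subseteq> C}"
    by (rule Collect_cong) (use span in auto)
  have S1: "?S1 = {C \<in> linear_codes k. ?W \<subseteq> C \<and> d j \<in> C}"
    by (rule Collect_cong) (use span less_Suc_eq in auto)
  have "0 \<le> (\<Prod>i<j. ?f i)" by (intro prod_nonneg) auto
  show ?case
  proof (cases "d j \<in> ?W")
    case True
    then have "?S1 = ?S0" unfolding S0 S1 by blast
    moreover have "?f j = 1" using True by simp
    ultimately show ?thesis using Suc.IH by simp
  next
    case False
    have "real (CARD('a) ^ k * card {C \<in> linear_codes k. ?W \<subseteq> C \<and> d j \<in> C})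
        \<le> real (card {C \<in> linear_codes k. ?W \<subseteq> C})"
      using card_codes_containing_new_vector[OF vec.subspace_span False k] by (simp only: of_nat_le_iff)
    then have "real (card ?S1) * real CARD('a) ^ k \<le> real (card ?S0)"
      unfolding S0 S1 by (simp only: of_nat_mult of_nat_power mult.commute)
    then have "real (card ?S1) * real CARD('a) ^ k * (\<Prod>i<j. ?f i) \<le> real (card ?S0) * (\<Prod>i<j. ?f i)"
      using \<open>0 \<le> (\<Prod>i<j. ?f i)\<close> by (rule mult_right_mono)
    also have "\<dots> \<le> real (card (linear_codes k :: ('a^'n) set set))" by (rule Suc.IH)
    finally have "real (card ?S1) * real CARD('a) ^ k * (\<Prod>i<j. ?f i)
        \<le> real (card (linear_codes k :: ('a^'n) set set))" .
    moreover have "?f j = real CARD('a) ^ k" using False by simp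
    ultimately show ?thesis by (simp only: prod.lessThan_Suc mult.assoc mult.commute[of "real CARD('a) ^ k"])
  qed
qed

lemma card_codes_containing_differences:
  fixes z :: "nat \<Rightarrow> 'a::{finite,field}^'n"
  assumes k: "k \<le> CARD('n)" and p: "p \<ge> 1"
  shows "real CARD('a) ^ (k * (p - 1)) * real (card {C \<in> linear_codes k. \<forall>i<p. z i - z 0 \<in> C})
    \<le> real (card (linear_codes k :: ('a^'n) set set)) *
      (\<Prod>i\<in>{1..<p}. 1 + (if z i - z 0 \<in> vec.span ((\<lambda>j. z j - z 0) ` {..<i}) then real CARD('a) ^ k else 0))"
proof -
  define q where "q = real CARD('a)"
  define d where "d i = z i - z 0" for i
  define fac where "fac i = (if d i \<in> vec.span (d ` {..<i}) then 1 else q ^ k)" for i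
  define c where "c = real (card {C \<in> linear_codes k. \<forall>i<p. d i \<in> C})"
  have q1: "q \<ge> 1" unfolding q_def by simp
  have "{..<p} = insert 0 {1..<p}" using p by auto
  moreover have "fac 0 = 1" unfolding fac_def d_def by (simp add: vec.span_zero)
  ultimately have fac: "(\<Prod>i<p. fac i) = (\<Prod>i\<in>{1..<p}. fac i)" by simp
  \<comment> \<open>a new direction costs a factor q^k in the count, a dependent one costs nothing\<close>
  have "q ^ (k * (p - 1)) = (\<Prod>i\<in>{1..<p}. q ^ k)" by (simp add: power_mult)
  also have "\<dots> \<le> (\<Prod>i\<in>{1..<p}. fac i * (1 + (if d i \<in> vec.span (d ` {..<i}) then q ^ k else 0)))"
    using q1 by (intro prod_mono) (auto simp: fac_def)
  also have "\<dots> = (\<Prod>i<p. fac i) * (\<Prod>i\<in>{1..<p}. 1 + (if d i \<in> vec.span (d ` {..<i}) then q ^ k else 0))"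
    by (simp add: prod.distrib fac)
  finally have "q ^ (k * (p - 1)) * c
      \<le> (\<Prod>i<p. fac i) * (\<Prod>i\<in>{1..<p}. 1 + (if d i \<in> vec.span (d ` {..<i}) then q ^ k else 0)) * c"
    by (rule mult_right_mono) (simp add: c_def)
  also have "\<dots> = (c * (\<Prod>i<p. fac i)) * (\<Prod>i\<in>{1..<p}. 1 + (if d i \<in> vec.span (d ` {..<i}) then q ^ k else 0))"
    by (simp only: mult_ac)
  also have "\<dots> \<le> real (card (linear_codes k :: ('a^'n) set set))
      * (\<Prod>i\<in>{1..<p}. 1 + (if d i \<in> vec.span (d ` {..<i}) then q ^ k else 0))"
  proof (rule mult_right_mono)
    show "c * (\<Prod>i<p. fac i) \<le> real (card (linear_codes k :: ('a^'n) set set))"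
      using card_codes_containing_seq[OF k, where d=d and j=p] unfolding c_def fac_def q_def .
  qed (use q1 in \<open>auto intro: prod_nonneg\<close>)
  finally show ?thesis unfolding q_def c_def d_def .
qed

section \<open>Collision probabilities of syndromes\<close>

lemma pmf_syndrome_dist:
  "pmf (syndrome_dist H Z) s = (\<Sum>x | H *v x = s. pmf Z (x :: 'a::{finite,field}^'n))"
proof -
  have "pmf (syndrome_dist H Z) s = measure (measure_pmf Z) {x. H *v x = s}"
    unfolding syndrome_dist_def pmf_map by (simp add: vimage_def)
  also have "\<dots> = (\<Sum>x | H *v x = s. pmf Z x)"
    by (rule measure_measure_pmf_finite) simp
  finally show ?thesis .
qed

lemma sum_syndrome_dist_power:
  fixes H :: "'a::{finite,field}^'n^'m" and Z :: "('a^'n) pmf"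
  assumes ker: "{x. H *v x = 0} = C" and p: "1 \<le> p"
  shows "(\<Sum>s\<in>UNIV. pmf (syndrome_dist H Z) s ^ p)
       = (\<Sum>z\<in>PiE {..<p} (\<lambda>_. UNIV). (\<Prod>i<p. pmf Z (z i)) * (if \<forall>i<p. z i - z 0 \<in> C then 1 else 0))"
proof -
  let ?g = "\<lambda>z. \<Prod>i<p. pmf Z (z i)"
  have power: "pmf (syndrome_dist H Z) s ^ p
      = (\<Sum>z\<in>PiE {..<p} (\<lambda>_. UNIV). if \<forall>i<p. H *v z i = s then ?g z else 0)" for s
  proof -
    have "{z \<in> PiE {..<p} (\<lambda>_. UNIV). \<forall>i<p. H *v z i = s} = PiE {..<p} (\<lambda>_. {x. H *v x = s})"
      by (auto simp: PiE_iff extensional_def)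
    then show ?thesis
      unfolding pmf_syndrome_dist prod_sum_PiE[of "{..<p}" "\<lambda>_. {x. H *v x = s}" "\<lambda>_ x. pmf Z x", simplified]
      using sum.inter_filter[of "PiE {..<p} (\<lambda>_. UNIV)" ?g "\<lambda>z. \<forall>i<p. H *v z i = s"]
      by (simp add: finite_PiE)
  qed
  \<comment> \<open>a tuple contributes to exactly one syndrome if all its syndromes agree, and to none otherwise\<close>
  have single: "(\<Sum>s\<in>UNIV. if \<forall>i<p. H *v z i = s then ?g z else 0)
      = ?g z * (if \<forall>i<p. z i - z 0 \<in> C then 1 else 0)" for z
  proof -
    have mem: "w \<in> C \<longleftrightarrow> H *v w = 0" for w using ker by blast
    have "(\<forall>i<p. H *v z i = s) \<longleftrightarrow> s = H *v z 0 \<and> (\<forall>i<p. z i - z 0 \<in> C)" for s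
      using p by (auto simp: mem matrix_vector_mult_diff_distrib)
    then have "(\<Sum>s\<in>UNIV. if \<forall>i<p. H *v z i = s then ?g z else 0)
        = (\<Sum>s\<in>UNIV. if s = H *v z 0 then (if \<forall>i<p. z i - z 0 \<in> C then ?g z else 0) else 0)"
      by (intro sum.cong) auto
    also have "\<dots> = (if \<forall>i<p. z i - z 0 \<in> C then ?g z else 0)" by simp
    also have "\<dots> = ?g z * (if \<forall>i<p. z i - z 0 \<in> C then 1 else 0)"
      by (simp only: if_distrib[of "(*) (?g z)"] mult_1_right mult_zero_right)
    finally show ?thesis .
  qed
  have "(\<Sum>s\<in>UNIV. pmf (syndrome_dist H Z) s ^ p)
      = (\<Sum>z\<in>PiE {..<p} (\<lambda>_. UNIV). \<Sum>s\<in>UNIV. if \<forall>i<p. H *v z i = s then ?g z else 0)"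
    unfolding power by (rule sum.swap)
  then show ?thesis by (simp only: single)
qed

lemma sum_UNIV_affine_reindex:
  fixes Q :: "'a::{finite,field}^'n \<Rightarrow> real"
  assumes "a \<noteq> 0"
  shows "(\<Sum>v\<in>UNIV. Q (a *s v + r)) = (\<Sum>v\<in>UNIV. Q v)"
proof -
  have inj: "inj (\<lambda>v. a *s v + r)" using assms by (auto simp: inj_def)
  then have "surj (\<lambda>v. a *s v + r)" using finite_UNIV_inj_surj[OF _ inj] by simp
  then show ?thesis using sum.reindex[OF inj, of Q] by simp
qed

text \<open>Young's inequality in the coordinate k, followed by the substitution v \<mapsto> a v + r, which
  preserves the (t+1)-st moment.\<close>

lemma sum_PiE_prod_affine_power_le:
  fixes P :: "'a::{finite,field}^'n \<Rightarrow> real" and F :: "(nat \<Rightarrow> 'a^'n) \<Rightarrow> 'a^'n"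
  assumes P0: "\<And>y. P y \<ge> 0" and P1: "(\<Sum>y\<in>UNIV. P y) = 1"
    and A: "finite A" "k \<notin> A" and a: "a \<noteq> 0"
    and F: "\<And>x v. F (x(k := v)) = a *s v + R x"
  shows "(\<Sum>z\<in>PiE (insert k A) (\<lambda>_. UNIV). (\<Prod>i\<in>insert k A. P (z i)) * P (F z) ^ t)
         \<le> (\<Sum>y\<in>UNIV. P y ^ (t+1))"
proof -
  let ?M = "\<Sum>y\<in>UNIV. P y ^ (t+1)"
  have inner: "(\<Sum>v\<in>UNIV. P v * P (a *s v + r) ^ t) \<le> ?M" for r
  proof -
    have "(\<Sum>v\<in>UNIV. P v * P (a *s v + r) ^ t)
        \<le> (\<Sum>v\<in>UNIV. (P v ^ (t+1) + real t * P (a *s v + r) ^ (t+1)) / real (t+1))"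
      using P0 by (intro sum_mono mult_power_le_Young) auto
    also have "\<dots> = (?M + real t * (\<Sum>v\<in>UNIV. P (a *s v + r) ^ (t+1))) / real (t+1)"
      by (simp add: sum_divide_distrib[symmetric] sum.distrib sum_distrib_left)
    also have "\<dots> = ?M"
      using sum_UNIV_affine_reindex[OF a, of "\<lambda>v. P v ^ (t+1)"] by (simp add: field_simps)
    finally show ?thesis .
  qed
  have "(\<Sum>z\<in>PiE (insert k A) (\<lambda>_. UNIV). (\<Prod>i\<in>insert k A. P (z i)) * P (F z) ^ t)
      = (\<Sum>v\<in>UNIV. \<Sum>x\<in>PiE A (\<lambda>_. UNIV). (\<Prod>i\<in>insert k A. P ((x(k := v)) i)) * P (F (x(k := v))) ^ t)"
    by (rule sum_PiE_insert_UNIV[OF A])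
  also have "\<dots> = (\<Sum>v\<in>UNIV. \<Sum>x\<in>PiE A (\<lambda>_. UNIV). (\<Prod>i\<in>A. P (x i)) * (P v * P (a *s v + R x) ^ t))"
  proof (intro sum.cong refl)
    fix v x
    have "(\<Prod>i\<in>A. P ((x(k := v)) i)) = (\<Prod>i\<in>A. P (x i))"
      using A by (intro prod.cong) auto
    then show "(\<Prod>i\<in>insert k A. P ((x(k := v)) i)) * P (F (x(k := v))) ^ t
        = (\<Prod>i\<in>A. P (x i)) * (P v * P (a *s v + R x) ^ t)" using A by (simp add: F)
  qed
  also have "\<dots> = (\<Sum>x\<in>PiE A (\<lambda>_. UNIV). (\<Prod>i\<in>A. P (x i)) * (\<Sum>v\<in>UNIV. P v * P (a *s v + R x) ^ t))"
    by (subst sum.swap) (simp add: sum_distrib_left)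
  also have "\<dots> \<le> (\<Sum>x\<in>PiE A (\<lambda>_. UNIV). (\<Prod>i\<in>A. P (x i)) * ?M)"
    by (intro sum_mono mult_left_mono[OF inner] prod_nonneg) (use P0 in auto)
  also have "\<dots> = ?M" using sum_PiE_prod_eq_1[OF A(1) P1] by (simp add: sum_distrib_right[symmetric])
  finally show ?thesis .
qed

lemma sum_PiE_prod_combination_power_le:
  fixes P :: "'a::{finite,field}^'n \<Rightarrow> real" and c :: "nat \<Rightarrow> 'a"
  assumes P0: "\<And>y. P y \<ge> 0" and P1: "(\<Sum>y\<in>UNIV. P y) = 1" and U: "finite U" "0 \<in> U"
  shows "(\<Sum>x\<in>PiE U (\<lambda>_. UNIV). (\<Prod>i\<in>U. P (x i)) * P (x 0 + (\<Sum>j\<in>U. c j *s (x j - x 0))) ^ t)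
         \<le> (\<Sum>y\<in>UNIV. P y ^ (t+1))"
proof -
  define F where "F x = x 0 + (\<Sum>j\<in>U. c j *s (x j - x 0))" for x :: "nat \<Rightarrow> 'a^'n"
  \<comment> \<open>F is an invertible affine function of a coordinate with nonzero coefficient, or of x 0\<close>
  have "(\<Sum>x\<in>PiE U (\<lambda>_. UNIV). (\<Prod>i\<in>U. P (x i)) * P (F x) ^ t) \<le> (\<Sum>y\<in>UNIV. P y ^ (t+1))"
  proof (cases "\<exists>k\<in>U - {0}. c k \<noteq> 0")
    case True
    then obtain k where k: "k \<in> U" "k \<noteq> 0" "c k \<noteq> 0" by blast
    define A where "A = U - {k}"
    have UA: "U = insert k A" and kA: "k \<notin> A" and fA: "finite A"
      using k U unfolding A_def by auto
    define R where "R x = x 0 - c k *s x 0 + (\<Sum>j\<in>A. c j *s (x j - x 0))" for x :: "nat \<Rightarrow> 'a^'n"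
    have F_upd: "F (x(k := v)) = c k *s v + R x" for x v
    proof -
      have "(\<Sum>j\<in>A. c j *s ((x(k := v)) j - x 0)) = (\<Sum>j\<in>A. c j *s (x j - x 0))"
        using kA by (intro sum.cong) auto
      then show ?thesis unfolding F_def UA R_def using k(2) kA fA by (simp add: algebra_simps)
    qed
    show ?thesis using sum_PiE_prod_affine_power_le[OF P0 P1 fA kA k(3) F_upd] unfolding UA .
  next
    case False
    define A where "A = U - {0}"
    have UA: "U = insert 0 A" and kA: "0 \<notin> A" and fA: "finite A"
      using U unfolding A_def by auto
    have F_upd: "F (x(0 := v)) = 1 *s v + 0" for x v
    proof -
      have "(\<Sum>j\<in>U. c j *s ((x(0 := v)) j - v)) = 0"
        using False by (intro sum.neutral) auto
      then show ?thesis unfolding F_def by simp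
    qed
    show ?thesis using sum_PiE_prod_affine_power_le[OF P0 P1 fA kA one_neq_zero F_upd] unfolding UA .
  qed
  then show ?thesis unfolding F_def .
qed

lemma sum_coset_span_le_sum_combinations:
  fixes P :: "'a::{finite,field}^'n \<Rightarrow> real" and g :: "nat \<Rightarrow> 'a^'n"
  assumes U: "finite U" and P0: "\<And>y. P y \<ge> 0"
  shows "(\<Sum>v | v - a \<in> vec.span (g ` U). P v) \<le> (\<Sum>c\<in>PiE U (\<lambda>_. UNIV). P (a + (\<Sum>j\<in>U. c j *s g j)))"
proof -
  let ?comb = "\<lambda>c. a + (\<Sum>j\<in>U. c j *s g j)"
  have "{v. v - a \<in> vec.span (g ` U)} \<subseteq> ?comb ` PiE U (\<lambda>_. UNIV)"
  proof
    fix v assume "v \<in> {v. v - a \<in> vec.span (g ` U)}"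
    then obtain c where "c \<in> PiE U (\<lambda>_. UNIV)" "v - a = (\<Sum>j\<in>U. c j *s g j)"
      using span_combinations_superset[OF U, of g] by blast
    then show "v \<in> ?comb ` PiE U (\<lambda>_. UNIV)" by (intro image_eqI[of _ _ c]) (auto simp: algebra_simps)
  qed
  then have "(\<Sum>v | v - a \<in> vec.span (g ` U). P v) \<le> (\<Sum>v\<in>?comb ` PiE U (\<lambda>_. UNIV). P v)"
    using P0 by (intro sum_mono2) auto
  also have "\<dots> \<le> (\<Sum>c\<in>PiE U (\<lambda>_. UNIV). P (?comb c))"
    using sum_image_le[of "PiE U (\<lambda>_. UNIV)" P ?comb] U P0 by (simp add: finite_PiE o_def)
  finally show ?thesis .
qed

lemma sum_tuples_in_span_of_rest_eq:
  fixes P :: "'a::{finite,field}^'n \<Rightarrow> real" and p :: nat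
  assumes T: "T \<subseteq> {1..<p}" and p: "1 \<le> p"
  defines "U \<equiv> {..<p} - T"
  shows "(\<Sum>z\<in>PiE {..<p} (\<lambda>_. UNIV). (\<Prod>i<p. P (z i)) *
            (if \<forall>i\<in>T. z i - z 0 \<in> vec.span ((\<lambda>j. z j - z 0) ` U) then 1 else 0))
       = (\<Sum>x\<in>PiE U (\<lambda>_. UNIV). (\<Prod>i\<in>U. P (x i)) *
            (\<Sum>v | v - x 0 \<in> vec.span ((\<lambda>j. x j - x 0) ` U). P v) ^ card T)"
proof -
  have finU: "finite U" unfolding U_def by simp
  have finT: "finite T" using finite_subset[OF T] by simp
  have U0: "0 \<in> U" using T p unfolding U_def by auto
  have disj: "U \<inter> T = {}" and UT: "{..<p} = U \<union> T" using T unfolding U_def by auto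
  define sp where "sp x = vec.span ((\<lambda>j. x j - x 0) ` U)" for x :: "nat \<Rightarrow> 'a^'n"
  define h where "h z = (\<Prod>i<p. P (z i)) * (if \<forall>i\<in>T. z i - z 0 \<in> sp z then 1 else (0::real))"
    for z :: "nat \<Rightarrow> 'a^'n"
  \<comment> \<open>given the coordinates in U, those in T are independent and each falls into the coset x 0 + sp x\<close>
  have split: "h (\<lambda>i. if i \<in> U then x i else y i)
      = (\<Prod>i\<in>U. P (x i)) * (\<Prod>i\<in>T. P (y i) * (if y i - x 0 \<in> sp x then 1 else 0))" for x y
  proof -
    define z where "z = (\<lambda>i. if i \<in> U then x i else y i)"
    have zU: "\<And>j. j \<in> U \<Longrightarrow> z j = x j" and zT: "\<And>i. i \<in> T \<Longrightarrow> z i = y i"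
      using disj unfolding z_def by auto
    have "(\<Prod>i<p. P (z i)) = (\<Prod>i\<in>U. P (x i)) * (\<Prod>i\<in>T. P (y i))"
      unfolding UT prod.union_disjoint[OF finU finT disj] using zU zT by (simp cong: prod.cong)
    moreover have "sp z = sp x" unfolding sp_def using zU U0 by (simp cong: image_cong)
    moreover have "(if \<forall>i\<in>T. z i - z 0 \<in> sp x then 1 else (0::real))
        = (\<Prod>i\<in>T. if y i - x 0 \<in> sp x then 1 else 0)"
      using zT zU[OF U0] prod_indicator[OF finT] by simp
    ultimately show ?thesis unfolding h_def z_def[symmetric] by (simp add: prod.distrib)
  qed
  have "(\<Sum>z\<in>PiE {..<p} (\<lambda>_. UNIV). h z)
      = (\<Sum>x\<in>PiE U (\<lambda>_. UNIV). \<Sum>y\<in>PiE T (\<lambda>_. UNIV). h (\<lambda>i. if i \<in> U then x i else y i))"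
    unfolding UT by (rule sum_PiE_Un_UNIV[OF finU finT disj])
  also have "\<dots> = (\<Sum>x\<in>PiE U (\<lambda>_. UNIV). (\<Prod>i\<in>U. P (x i)) *
      (\<Sum>v\<in>UNIV. P v * (if v - x 0 \<in> sp x then 1 else 0)) ^ card T)"
  proof (intro sum.cong refl)
    fix x
    have "(\<Sum>y\<in>PiE T (\<lambda>_. UNIV). \<Prod>i\<in>T. P (y i) * (if y i - x 0 \<in> sp x then 1 else 0))
        = (\<Prod>i\<in>T. \<Sum>v\<in>UNIV. P v * (if v - x 0 \<in> sp x then 1 else 0))"
      using prod_sum_PiE[OF finT, of "\<lambda>_. UNIV" "\<lambda>_ v. P v * (if v - x 0 \<in> sp x then 1 else 0)"]
      by simp
    then show "(\<Sum>y\<in>PiE T (\<lambda>_. UNIV). h (\<lambda>i. if i \<in> U then x i else y i))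
        = (\<Prod>i\<in>U. P (x i)) * (\<Sum>v\<in>UNIV. P v * (if v - x 0 \<in> sp x then 1 else 0)) ^ card T"
      unfolding split by (simp add: sum_distrib_left[symmetric])
  qed
  also have "\<dots> = (\<Sum>x\<in>PiE U (\<lambda>_. UNIV). (\<Prod>i\<in>U. P (x i)) * (\<Sum>v | v - x 0 \<in> sp x. P v) ^ card T)"
    by (simp add: sum.inter_filter[symmetric] if_distrib[of "(*) _"] cong: if_cong)
  finally show ?thesis unfolding h_def sp_def .
qed

lemma sum_tuples_in_span_of_rest_le:
  fixes P :: "'a::{finite,field}^'n \<Rightarrow> real" and G :: real and p :: nat
  assumes P0: "\<And>y. P y \<ge> 0" and P1: "(\<Sum>y\<in>UNIV. P y) = 1"
    and T: "T \<subseteq> {1..<p}" and p: "1 \<le> p" and G: "G \<ge> 0"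
    and moment: "card T \<ge> 1 \<Longrightarrow> (\<Sum>y\<in>UNIV. P y ^ (card T + 1)) \<le> G ^ card T"
  shows "(\<Sum>z\<in>PiE {..<p} (\<lambda>_. UNIV). (\<Prod>i<p. P (z i)) *
            (if \<forall>i\<in>T. z i - z 0 \<in> vec.span ((\<lambda>j. z j - z 0) ` ({..<p} - T)) then 1 else 0))
         \<le> (real CARD('a) ^ p * G) ^ card T"
proof -
  define U where "U = {..<p} - T"
  define t where "t = card T"
  have finU: "finite U" and U0: "0 \<in> U" and cU: "card U \<le> p"
    using T p card_mono[of "{..<p}" U] unfolding U_def by auto
  define comb where "comb c x = x 0 + (\<Sum>j\<in>U. c j *s (x j - x 0))"
    for c :: "nat \<Rightarrow> 'a" and x :: "nat \<Rightarrow> 'a^'n"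
  define mass where "mass x = (\<Sum>v | v - x 0 \<in> vec.span ((\<lambda>j. x j - x 0) ` U). P v)" for x
  let ?M = "\<Sum>y\<in>UNIV. P y ^ (t+1)"
  let ?N = "real (card (PiE U (\<lambda>_. UNIV :: 'a set)))"
  have N: "?N = real CARD('a) ^ card U" using finU by (simp add: card_PiE)
  have Pprod: "0 \<le> (\<Prod>i\<in>U. P (x i))" for x using P0 by (intro prod_nonneg) auto
  have eq: "(\<Sum>z\<in>PiE {..<p} (\<lambda>_. UNIV). (\<Prod>i<p. P (z i)) *
            (if \<forall>i\<in>T. z i - z 0 \<in> vec.span ((\<lambda>j. z j - z 0) ` ({..<p} - T)) then 1 else 0))
      = (\<Sum>x\<in>PiE U (\<lambda>_. UNIV). (\<Prod>i\<in>U. P (x i)) * mass x ^ t)"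
    using sum_tuples_in_span_of_rest_eq[OF T p, where P=P] unfolding U_def mass_def t_def .
  show ?thesis
  proof (cases "t = 0")
    case True
    then show ?thesis unfolding eq using sum_PiE_prod_eq_1[OF finU P1] t_def by simp
  next
    case False
    then have t1: "t \<ge> 1" by simp
    \<comment> \<open>the power mean inequality over the q^|U| coefficient vectors spanning the coset\<close>
    have mass_power: "mass x ^ t \<le> ?N ^ (t - 1) * (\<Sum>c\<in>PiE U (\<lambda>_. UNIV). P (comb c x) ^ t)" for x
    proof -
      have "mass x ^ t \<le> (\<Sum>c\<in>PiE U (\<lambda>_. UNIV). P (comb c x)) ^ t"
        using sum_coset_span_le_sum_combinations[OF finU P0, where a="x 0" and g="\<lambda>j. x j - x 0"] P0
        unfolding mass_def comb_def by (intro power_mono sum_nonneg) auto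
      also have "\<dots> \<le> ?N ^ (t - 1) * (\<Sum>c\<in>PiE U (\<lambda>_. UNIV). P (comb c x) ^ t)"
        using power_sum_le_card_sum_power[of "PiE U (\<lambda>_. UNIV)" "\<lambda>c. P (comb c x)" t] finU P0 t1
        by (simp add: finite_PiE)
      finally show ?thesis .
    qed
    have "(\<Sum>x\<in>PiE U (\<lambda>_. UNIV). (\<Prod>i\<in>U. P (x i)) * mass x ^ t)
        \<le> (\<Sum>x\<in>PiE U (\<lambda>_. UNIV). (\<Prod>i\<in>U. P (x i)) * (?N ^ (t - 1) * (\<Sum>c\<in>PiE U (\<lambda>_. UNIV). P (comb c x) ^ t)))"
      by (intro sum_mono mult_left_mono mass_power Pprod)
    also have "\<dots> = ?N ^ (t - 1) * (\<Sum>c\<in>PiE U (\<lambda>_. UNIV). \<Sum>x\<in>PiE U (\<lambda>_. UNIV). (\<Prod>i\<in>U. P (x i)) * P (comb c x) ^ t)"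
      by (subst sum.swap) (simp add: sum_distrib_left mult_ac)
    also have "\<dots> \<le> ?N ^ (t - 1) * (\<Sum>c\<in>PiE U (\<lambda>_. UNIV :: 'a set). ?M)"
      using sum_PiE_prod_combination_power_le[OF P0 P1 finU U0] unfolding comb_def
      by (intro mult_left_mono sum_mono) auto
    also have "\<dots> = ?N ^ t * ?M" using t1 by (simp add: power_eq_if mult_ac)
    also have "\<dots> \<le> ?N ^ t * G ^ t" using moment t1 unfolding t_def by (intro mult_left_mono) auto
    also have "\<dots> \<le> (real CARD('a) ^ p * G) ^ t"
      unfolding N power_mult_distrib[symmetric] using cU G by (intro power_mono mult_right_mono power_increasing) auto
    finally show ?thesis unfolding eq t_def .
  qed
qed

lemma sum_tuples_earlier_dependent_le:
  fixes P :: "'a::{finite,field}^'n \<Rightarrow> real" and G c :: real and p :: nat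
  assumes P0: "\<And>y. P y \<ge> 0" and P1: "(\<Sum>y\<in>UNIV. P y) = 1"
    and T: "T \<subseteq> {1..<p}" and p: "1 \<le> p" and G: "G \<ge> 0" and c: "c \<ge> 0"
    and moment: "card T \<ge> 1 \<Longrightarrow> (\<Sum>y\<in>UNIV. P y ^ (card T + 1)) \<le> G ^ card T"
  shows "(\<Sum>z\<in>PiE {..<p} (\<lambda>_. UNIV). (\<Prod>i<p. P (z i)) *
            (\<Prod>i\<in>T. if z i - z 0 \<in> vec.span ((\<lambda>j. z j - z 0) ` {..<i}) then c else 0))
         \<le> (c * real CARD('a) ^ p * G) ^ card T"
proof -
  let ?earlier = "\<lambda>z. \<forall>i\<in>T. z i - z 0 \<in> vec.span ((\<lambda>j. z j - z 0) ` {..<i})"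
  let ?rest = "\<lambda>z. \<forall>i\<in>T. z i - z 0 \<in> vec.span ((\<lambda>j. z j - z 0) ` ({..<p} - T))"
  have finT: "finite T" using finite_subset[OF T] by simp
  have Tp: "T \<subseteq> {..<p}" using T by auto
  have prod_c: "(\<Prod>i\<in>T. if Q i then c else 0) = c ^ card T * (if \<forall>i\<in>T. Q i then 1 else 0)" for Q
  proof -
    have "(\<Prod>i\<in>T. if Q i then c else 0) = (\<Prod>i\<in>T. c * (if Q i then 1 else 0))"
      by (intro prod.cong) auto
    then show ?thesis by (simp add: prod.distrib prod_indicator[OF finT])
  qed
  have "(\<Prod>i\<in>T. if z i - z 0 \<in> vec.span ((\<lambda>j. z j - z 0) ` {..<i}) then c else 0)
      \<le> c ^ card T * (if ?rest z then 1 else 0)" for z :: "nat \<Rightarrow> 'a^'n"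
  proof -
    have "(\<Prod>i\<in>T. if z i - z 0 \<in> vec.span ((\<lambda>j. z j - z 0) ` {..<i}) then c else 0)
        = c ^ card T * (if ?earlier z then 1 else 0)"
      by (rule prod_c)
    also have "\<dots> \<le> c ^ card T * (if ?rest z then 1 else 0)"
      using span_earlier_imp_span_rest[OF Tp, of "\<lambda>j. z j - z 0"] c by auto
    finally show ?thesis .
  qed
  then have "(\<Sum>z\<in>PiE {..<p} (\<lambda>_. UNIV). (\<Prod>i<p. P (z i)) *
            (\<Prod>i\<in>T. if z i - z 0 \<in> vec.span ((\<lambda>j. z j - z 0) ` {..<i}) then c else 0))
      \<le> (\<Sum>z\<in>PiE {..<p} (\<lambda>_. UNIV). (\<Prod>i<p. P (z i)) * (c ^ card T * (if ?rest z then 1 else 0)))"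
    using P0 by (intro sum_mono mult_left_mono prod_nonneg) auto
  also have "\<dots> = c ^ card T * (\<Sum>z\<in>PiE {..<p} (\<lambda>_. UNIV). (\<Prod>i<p. P (z i)) * (if ?rest z then 1 else 0))"
    by (simp add: sum_distrib_left mult_ac)
  also have "\<dots> \<le> c ^ card T * (real CARD('a) ^ p * G) ^ card T"
    using sum_tuples_in_span_of_rest_le[OF P0 P1 T p G moment] c by (intro mult_left_mono) auto
  finally show ?thesis by (simp add: power_mult_distrib mult.assoc)
qed

lemma sum_codes_collision_le:
  fixes Z :: "('a::{finite,field}^'n) pmf" and G :: real
  assumes p: "1 \<le> p" and mn: "CARD('m::finite) \<le> CARD('n)" and G: "G \<ge> 0"
    and moment: "\<And>t. 1 \<le> t \<Longrightarrow> t \<le> p - 1 \<Longrightarrow> (\<Sum>y\<in>UNIV. pmf Z y ^ (t+1)) \<le> G ^ t"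
  defines "q \<equiv> real CARD('a)" and "m \<equiv> CARD('m)"
  shows "(\<Sum>C\<in>linear_codes m. q ^ (m * (p - 1)) *
            (\<Sum>s\<in>UNIV. pmf (syndrome_dist (parity_check C :: 'a^'n^'m) Z) s ^ p))
         \<le> real (card (linear_codes m :: ('a^'n) set set)) * (1 + q ^ (m + p) * G) ^ (p - 1)"
proof -
  define L where "L = (linear_codes m :: ('a^'n) set set)"
  define N where "N = real (card L)"
  define g where "g z = (\<Prod>i<p. pmf Z (z i))" for z :: "nat \<Rightarrow> 'a^'n"
  define f where "f z i = (if z i - z 0 \<in> vec.span ((\<lambda>j. z j - z 0) ` {..<i}) then q ^ m else 0)"
    for z :: "nat \<Rightarrow> 'a^'n" and i
  let ?J = "{1..<p}" and ?Tup = "PiE {..<p} (\<lambda>_. UNIV :: ('a^'n) set)"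
  have finL: "finite L" unfolding L_def by (rule finite_linear_codes)
  have g0: "g z \<ge> 0" for z unfolding g_def by (intro prod_nonneg) auto
  have "(\<Sum>C\<in>L. \<Sum>s\<in>UNIV. pmf (syndrome_dist (parity_check C :: 'a^'n^'m) Z) s ^ p)
      = (\<Sum>C\<in>L. \<Sum>z\<in>?Tup. g z * (if \<forall>i<p. z i - z 0 \<in> C then 1 else 0))"
    using sum_syndrome_dist_power[OF kernel_parity_check p] mn
    unfolding L_def m_def g_def by (intro sum.cong) auto
  also have "\<dots> = (\<Sum>z\<in>?Tup. g z * real (card {C\<in>L. \<forall>i<p. z i - z 0 \<in> C}))"
    by (subst sum.swap) (simp only: sum_distrib_left[symmetric] sum_indicator_eq_card[OF finL])
  finally have "(\<Sum>C\<in>L. q ^ (m * (p - 1)) *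
        (\<Sum>s\<in>UNIV. pmf (syndrome_dist (parity_check C :: 'a^'n^'m) Z) s ^ p))
      = q ^ (m * (p - 1)) * (\<Sum>z\<in>?Tup. g z * real (card {C\<in>L. \<forall>i<p. z i - z 0 \<in> C}))"
    by (simp only: sum_distrib_left[symmetric])
  also have "\<dots> = (\<Sum>z\<in>?Tup. g z * (q ^ (m * (p - 1)) * real (card {C\<in>L. \<forall>i<p. z i - z 0 \<in> C})))"
    by (simp add: sum_distrib_left mult_ac)
  also have "\<dots> \<le> (\<Sum>z\<in>?Tup. g z * (N * (\<Prod>i\<in>?J. 1 + f z i)))"
    using card_codes_containing_differences[of m p] mn p g0
    unfolding N_def L_def f_def q_def m_def by (intro sum_mono mult_left_mono) auto
  also have "\<dots> = (\<Sum>z\<in>?Tup. \<Sum>T\<in>Pow ?J. N * (g z * (\<Prod>i\<in>T. f z i)))"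
  proof -
    have "(\<Prod>i\<in>?J. 1 + f z i) = (\<Sum>T\<in>Pow ?J. \<Prod>i\<in>T. f z i)" for z
      using prod_add[of ?J "f z" "\<lambda>_. 1"] by (simp add: add.commute)
    then show ?thesis by (simp add: sum_distrib_left mult_ac)
  qed
  also have "\<dots> = N * (\<Sum>T\<in>Pow ?J. \<Sum>z\<in>?Tup. g z * (\<Prod>i\<in>T. f z i))"
    by (subst sum.swap) (simp add: sum_distrib_left)
  also have "\<dots> \<le> N * (\<Sum>T\<in>Pow ?J. (q ^ m * q ^ p * G) ^ card T)"
  proof (intro mult_left_mono sum_mono)
    fix T assume "T \<in> Pow ?J"
    then have T: "T \<subseteq> ?J" and "card T \<le> p - 1" using card_mono[of ?J T] by auto
    then have "card T \<ge> 1 \<Longrightarrow> (\<Sum>y\<in>UNIV. pmf Z y ^ (card T + 1)) \<le> G ^ card T"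
      using moment by simp
    from sum_tuples_earlier_dependent_le[OF _ _ T p G _ this, where c="q ^ m"]
    show "(\<Sum>z\<in>?Tup. g z * (\<Prod>i\<in>T. f z i)) \<le> (q ^ m * q ^ p * G) ^ card T"
      unfolding g_def f_def q_def by (simp add: sum_pmf_eq_1)
  qed (simp add: N_def)
  also have "\<dots> = N * (1 + q ^ (m + p) * G) ^ (p - 1)"
    using prod_add[of ?J "\<lambda>_. q ^ m * q ^ p * G" "\<lambda>_. 1"] by (simp add: power_add add.commute)
  finally show ?thesis unfolding N_def L_def .
qed

section \<open>Renyi divergence and p-norm of the syndrome distribution\<close>

lemma sum_pmf_power_pos:
  fixes P :: "'b::finite pmf"
  shows "(\<Sum>y\<in>UNIV. pmf P y ^ p) > 0"
proof -
  have "(\<Sum>y\<in>UNIV. pmf P y) = 1" by (rule sum_pmf_eq_1) auto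
  then have "\<exists>y. pmf P y \<noteq> 0" by (metis (mono_tags) sum.neutral zero_neq_one)
  then obtain y0 where "pmf P y0 > 0" by (metis less_eq_real_def pmf_nonneg)
  then show ?thesis by (intro sum_pos2[of _ y0]) auto
qed

lemma renyi_entropy_rate_imp:
  fixes Z :: "'b::finite pmf" and q \<epsilon> :: real
  assumes q: "q > 1" and eps: "\<epsilon> > 0" and p: "p \<ge> 2"
    and rate: "real m \<le> renyi_entropy q (real p) Z - real p - log q (1 / \<epsilon>)"
  shows "q ^ (m + p) * (\<Sum>y\<in>UNIV. pmf Z y ^ p) powr (1 / (real p - 1)) \<le> \<epsilon>"
proof -
  define M where "M = (\<Sum>y\<in>UNIV. pmf Z y ^ p)"
  define G where "G = M powr (1 / (real p - 1))"
  have M: "M > 0" unfolding M_def by (rule sum_pmf_power_pos)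
  have G: "G > 0" unfolding G_def using M by simp
  have "renyi_entropy q (real p) Z = 1 / (1 - real p) * log q M"
    unfolding renyi_entropy_def M_def using p by (simp add: powr_realpow')
  with rate have "q powr (real m + real p + log q (1 / \<epsilon>)) \<le> q powr (1 / (1 - real p) * log q M)"
    using q by simp
  moreover have "q powr (real m + real p + log q (1 / \<epsilon>)) = q ^ (m + p) * (1 / \<epsilon>)"
    using q eps by (simp add: powr_add powr_realpow flip: of_nat_add)
  moreover have "q powr (1 / (1 - real p) * log q M) = 1 / G"
  proof -
    have "1 / (1 - real p) = - (1 / (real p - 1))" using p by (simp add: field_simps)
    moreover have "q powr (1 / (1 - real p) * log q M) = (q powr (log q M)) powr (1 / (1 - real p))"
      by (simp add: powr_powr mult.commute)
    ultimately have "q powr (1 / (1 - real p) * log q M) = M powr (- (1 / (real p - 1)))"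
      using q M by simp
    then show ?thesis unfolding G_def by (simp add: powr_minus divide_inverse)
  qed
  ultimately have "q ^ (m + p) * (1 / \<epsilon>) \<le> 1 / G" by simp
  then show ?thesis using G eps unfolding G_def M_def by (simp add: field_simps)
qed

lemma renyi_div_pmf_of_set_UNIV:
  fixes P :: "'b::finite pmf"
  assumes p: "p \<ge> 1"
  shows "renyi_div q (real p) P (pmf_of_set UNIV)
       = ln (real CARD('b) ^ (p - 1) * (\<Sum>x\<in>UNIV. pmf P x ^ p)) / ((real p - 1) * ln q)"
proof -
  have "(1 / real CARD('b)) powr (- (real p - 1)) = inverse ((1 / real CARD('b)) powr (real p - 1))"
    by (rule powr_minus)
  also have "\<dots> = real CARD('b) powr real (p - 1)"
    using p by (simp add: powr_divide of_nat_diff)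
  also have "\<dots> = real CARD('b) ^ (p - 1)" by (simp add: powr_realpow)
  finally have "(\<Sum>x\<in>UNIV. pmf P x powr real p * pmf (pmf_of_set UNIV) x powr (- (real p - 1)))
      = real CARD('b) ^ (p - 1) * (\<Sum>x\<in>UNIV. pmf P x ^ p)"
    using p by (simp add: pmf_of_set powr_realpow' sum_distrib_right mult_ac)
  then show ?thesis unfolding renyi_div_def log_def by simp
qed

lemma mean_abs_power_le_collision:
  fixes P :: "'b::finite pmf"
  assumes p: "p \<ge> 2"
  shows "1 / real CARD('b) * (\<Sum>x\<in>UNIV. \<bar>real CARD('b) * pmf P x - 1\<bar> powr real p)
    \<le> real CARD('b) ^ (p - 1) * (\<Sum>x\<in>UNIV. pmf P x ^ p) - 1"
proof -
  define c where "c = real CARD('b)"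
  have c: "c \<ge> 1" unfolding c_def by simp
  have "(\<Sum>x\<in>UNIV. \<bar>c * pmf P x - 1\<bar> powr real p) = (\<Sum>x\<in>UNIV. \<bar>c * pmf P x - 1\<bar> ^ p)"
    using p by (simp add: powr_realpow')
  also have "\<dots> \<le> (\<Sum>x\<in>UNIV. (c * pmf P x) ^ p - 1 - real p * (c * pmf P x - 1))"
    using c p by (intro sum_mono abs_diff_one_power_le) auto
  also have "\<dots> = c ^ p * (\<Sum>x\<in>UNIV. pmf P x ^ p) - c - real p * (c * (\<Sum>x\<in>UNIV. pmf P x) - c)"
  proof -
    have "(\<Sum>x\<in>(UNIV :: 'b set). (1::real)) = c" unfolding c_def by simp
    moreover have "(\<Sum>x\<in>UNIV. (c * pmf P x) ^ p) = c ^ p * (\<Sum>x\<in>UNIV. pmf P x ^ p)"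
      by (simp add: power_mult_distrib sum_distrib_left)
    moreover have "(\<Sum>x\<in>UNIV. (c * pmf P x) ^ p - 1 - real p * (c * pmf P x - 1))
        = (\<Sum>x\<in>UNIV. (c * pmf P x) ^ p) - (\<Sum>x\<in>(UNIV :: 'b set). 1)
          - real p * ((\<Sum>x\<in>UNIV. c * pmf P x) - (\<Sum>x\<in>(UNIV :: 'b set). 1))"
      by (simp only: sum_subtractf sum_distrib_left[symmetric])
    ultimately show ?thesis by (simp add: sum_distrib_left)
  qed
  also have "\<dots> = c * (c ^ (p - 1) * (\<Sum>x\<in>UNIV. pmf P x ^ p) - 1)"
    using p by (simp add: sum_pmf_eq_1 algebra_simps flip: power_Suc)
  finally show ?thesis using c unfolding c_def[symmetric] by (simp add: field_simps)
qed

lemma sum_ln_le_of_sum_le_power: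
  fixes S :: "'b \<Rightarrow> real"
  assumes L: "finite L" and S: "\<And>C. C \<in> L \<Longrightarrow> S C > 0"
    and sum: "(\<Sum>C\<in>L. S C) \<le> real (card L) * (1 + \<epsilon>) ^ k" and eps: "\<epsilon> \<ge> 0"
  shows "(\<Sum>C\<in>L. ln (S C)) \<le> real (card L) * (real k * \<epsilon>)"
proof (cases "L = {}")
  case False
  then have N: "real (card L) > 0" using L by (simp add: card_gt_0_iff)
  have mean: "0 < (\<Sum>C\<in>L. S C) / real (card L)"
    using S N L False by (intro divide_pos_pos sum_pos) auto
  have "(\<Sum>C\<in>L. ln (S C)) \<le> real (card L) * ln ((\<Sum>C\<in>L. S C) / real (card L))"
    by (rule sum_ln_le_card_ln_mean[OF L False S])
  also have "\<dots> \<le> real (card L) * ln ((1 + \<epsilon>) ^ k)"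
    using sum N mean eps by (intro mult_left_mono ln_mono) (auto simp: field_simps)
  also have "\<dots> \<le> real (card L) * (real k * \<epsilon>)"
    using eps ln_add_one_self_le_self[of \<epsilon>] by (simp add: ln_realpow mult_left_mono)
  finally show ?thesis .
qed simp

lemma sum_powr_le_of_sum_le:
  fixes S :: "'b \<Rightarrow> real"
  assumes L: "finite L" and S: "\<And>C. C \<in> L \<Longrightarrow> S C \<ge> 1"
    and sum: "(\<Sum>C\<in>L. S C) \<le> real (card L) * B" and \<theta>: "0 < \<theta>" "\<theta> \<le> 1"
  shows "(\<Sum>C\<in>L. (S C - 1) powr \<theta>) \<le> real (card L) * (B - 1) powr \<theta>"
proof (cases "L = {}")
  case False
  then have N: "real (card L) > 0" using L by (simp add: card_gt_0_iff)
  have mean: "(\<Sum>C\<in>L. S C - 1) / real (card L) = (\<Sum>C\<in>L. S C) / real (card L) - 1"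
    using N by (simp add: sum_subtractf diff_divide_distrib)
  have "(\<Sum>C\<in>L. (S C - 1) powr \<theta>) \<le> real (card L) * ((\<Sum>C\<in>L. S C - 1) / real (card L)) powr \<theta>"
    using S \<theta> by (intro sum_powr_le_card_mean_powr[OF L False]) auto
  also have "\<dots> \<le> real (card L) * (B - 1) powr \<theta>"
    unfolding mean using sum N S \<theta> sum_nonneg[of L "\<lambda>C. S C - 1"]
    by (intro mult_left_mono powr_mono2) (auto simp: field_simps sum_subtractf)
  finally show ?thesis .
qed simp

lemma collision_ge_one:
  fixes P :: "'b::finite pmf"
  assumes "p \<ge> 2"
  shows "real CARD('b) ^ (p - 1) * (\<Sum>x\<in>UNIV. pmf P x ^ p) \<ge> 1"
proof -
  have "0 \<le> 1 / real CARD('b) * (\<Sum>x\<in>UNIV. \<bar>real CARD('b) * pmf P x - 1\<bar> powr real p)"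
    by (intro mult_nonneg_nonneg sum_nonneg) auto
  then show ?thesis using mean_abs_power_le_collision[OF assms, of P] by linarith
qed

lemma mean_renyi_div_pmf_of_set_UNIV_le:
  fixes P :: "'c \<Rightarrow> 'b::finite pmf" and q \<epsilon> :: real
  assumes L: "finite L" and q: "q > 1" and p: "p \<ge> 2" and eps: "\<epsilon> > 0"
    and sum: "(\<Sum>C\<in>L. real CARD('b) ^ (p - 1) * (\<Sum>x\<in>UNIV. pmf (P C) x ^ p))
      \<le> real (card L) * (1 + \<epsilon>) ^ (p - 1)"
  shows "(\<Sum>C\<in>L. renyi_div q (real p) (P C) (pmf_of_set UNIV)) / real (card L)
      \<le> real p * \<epsilon> / ((real p - 1) * ln q)"
proof -
  define S where "S C = real CARD('b) ^ (p - 1) * (\<Sum>x\<in>UNIV. pmf (P C) x ^ p)" for C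
  have p1: "1 \<le> p" "real p - 1 > 0" and lnq: "ln q > 0" using p q by auto
  have "(\<Sum>C\<in>L. renyi_div q (real p) (P C) (pmf_of_set UNIV)) = (\<Sum>C\<in>L. ln (S C)) / ((real p - 1) * ln q)"
    unfolding S_def renyi_div_pmf_of_set_UNIV[OF p1(1)] by (simp add: sum_divide_distrib)
  also have "\<dots> \<le> real (card L) * (real (p - 1) * \<epsilon>) / ((real p - 1) * ln q)"
    using sum_ln_le_of_sum_le_power[OF L _ sum[folded S_def]] collision_ge_one[OF p, where 'b='b] eps p1 lnq
    by (intro divide_right_mono) (auto simp: S_def less_le_trans[OF zero_less_one])
  also have "\<dots> = real (card L) * ((real p - 1) * \<epsilon> / ((real p - 1) * ln q))"
    using p1 by (simp add: of_nat_diff)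
  also have "\<dots> \<le> real (card L) * (real p * \<epsilon> / ((real p - 1) * ln q))"
    using eps lnq p1 by (intro mult_left_mono divide_right_mono mult_right_mono) auto
  finally show ?thesis using eps lnq p1 by (intro divide_card_le) auto
qed

lemma mean_pnorm_le:
  fixes P :: "'c \<Rightarrow> 'b::finite pmf" and \<epsilon> :: real
  assumes L: "finite L" and p: "p \<ge> 2" and eps: "\<epsilon> > 0"
    and sum: "(\<Sum>C\<in>L. real CARD('b) ^ (p - 1) * (\<Sum>x\<in>UNIV. pmf (P C) x ^ p))
      \<le> real (card L) * (1 + \<epsilon>) ^ (p - 1)"
  shows "(\<Sum>C\<in>L. pnorm (real p) (\<lambda>x. real CARD('b) * pmf (P C) x - 1)) / real (card L)
      \<le> 2 powr (1 - 1 / real p) * ((1 + \<epsilon>) ^ p - 1) powr (1 / real p)"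
proof -
  define S where "S C = real CARD('b) ^ (p - 1) * (\<Sum>x\<in>UNIV. pmf (P C) x ^ p)" for C
  have nonneg: "0 \<le> 1 / real CARD('b) * (\<Sum>x\<in>UNIV. \<bar>real CARD('b) * pmf (P C) x - 1\<bar> powr real p)"
    for C by (intro mult_nonneg_nonneg sum_nonneg) auto
  have "(\<Sum>C\<in>L. pnorm (real p) (\<lambda>x. real CARD('b) * pmf (P C) x - 1))
      \<le> (\<Sum>C\<in>L. (S C - 1) powr (1 / real p))"
    unfolding pnorm_def S_def using mean_abs_power_le_collision[OF p] nonneg
    by (intro sum_mono powr_mono2) auto
  also have "\<dots> \<le> real (card L) * ((1 + \<epsilon>) ^ (p - 1) - 1) powr (1 / real p)"
    using sum_powr_le_of_sum_le[OF L _ sum[folded S_def]] collision_ge_one[OF p, where 'b='b] p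
    by (auto simp: S_def)
  also have "\<dots> \<le> real (card L) * ((1 + \<epsilon>) ^ p - 1) powr (1 / real p)"
    using eps one_le_power[of "1 + \<epsilon>" "p - 1"]
    by (intro mult_left_mono powr_mono2 diff_right_mono power_increasing) auto
  also have "\<dots> \<le> real (card L) * (2 powr (1 - 1 / real p) * ((1 + \<epsilon>) ^ p - 1) powr (1 / real p))"
  proof (intro mult_left_mono)
    have "1 \<le> 2 powr (1 - 1 / real p)" using p by (intro ge_one_powr_ge_zero) auto
    then show "((1 + \<epsilon>) ^ p - 1) powr (1 / real p)
        \<le> 2 powr (1 - 1 / real p) * ((1 + \<epsilon>) ^ p - 1) powr (1 / real p)"
      using mult_right_mono[of 1 "2 powr (1 - 1 / real p)" "((1 + \<epsilon>) ^ p - 1) powr (1 / real p)"]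
      by simp
  qed simp
  finally show ?thesis by (auto intro: divide_card_le)
qed

theorem corollary3p2:
  fixes Z :: "('a::{finite,field} ^ 'n) pmf"
    and p :: nat and \<epsilon> :: real
  defines "q \<equiv> real CARD('a)"
    and "m \<equiv> CARD('m::finite)"
    and "n \<equiv> CARD('n)"
  assumes eps: "\<epsilon> > 0"
    and p: "p \<ge> 2"
    and mn: "m \<le> n"
    and rate: "real m \<le> renyi_entropy q (real p) Z - real p - log q (1 / \<epsilon>)"
  shows "(\<Sum>C\<in>linear_codes m.
            renyi_div q (real p) (syndrome_dist (parity_check C :: 'a^'n^'m) Z)
              (pmf_of_set (UNIV :: ('a^'m) set))) / real (card (linear_codes m :: ('a^'n) set set))
           \<le> real p * \<epsilon> / ((real p - 1) * ln q)
       \<and> (\<Sum>C\<in>linear_codes m.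
            pnorm (real p) (\<lambda>x::'a^'m. q ^ m * pmf (syndrome_dist (parity_check C :: 'a^'n^'m) Z) x - 1))
              / real (card (linear_codes m :: ('a^'n) set set))
           \<le> 2 powr (1 - 1 / real p) * ((1 + \<epsilon>) ^ p - 1) powr (1 / real p)"
proof -
  let ?L = "linear_codes m :: ('a^'n) set set"
  let ?P = "\<lambda>C. syndrome_dist (parity_check C :: 'a^'n^'m) Z"
  define G where "G = (\<Sum>y\<in>UNIV. pmf Z y ^ p) powr (1 / (real p - 1))"
  have q: "q > 1" and qm: "real CARD('a^'m) = q ^ m"
    using card_field_ge_2[where 'a='a] unfolding q_def m_def by auto
  have moment: "(\<Sum>y\<in>UNIV. pmf Z y ^ (t+1)) \<le> G ^ t" if "1 \<le> t" "t \<le> p - 1" for t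
    unfolding G_def by (rule moment_le_collision_powr[OF _ _ that]) (auto simp: sum_pmf_eq_1)
  have "(\<Sum>C\<in>?L. q ^ (m * (p - 1)) * (\<Sum>s\<in>UNIV. pmf (?P C) s ^ p))
      \<le> card ?L * (1 + q ^ (m + p) * G) ^ (p - 1)"
    using sum_codes_collision_le[OF _ mn[unfolded m_def n_def] _ moment] p
    unfolding q_def m_def G_def by simp
  also have "\<dots> \<le> card ?L * (1 + \<epsilon>) ^ (p - 1)"
    using renyi_entropy_rate_imp[OF q eps p rate] q unfolding G_def
    by (intro mult_left_mono power_mono) auto
  finally have "(\<Sum>C\<in>?L. real CARD('a^'m) ^ (p - 1) * (\<Sum>s\<in>UNIV. pmf (?P C) s ^ p))
      \<le> card ?L * (1 + \<epsilon>) ^ (p - 1)"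
    unfolding qm by (simp add: power_mult)
  from mean_renyi_div_pmf_of_set_UNIV_le[OF finite_linear_codes q p eps this]
    mean_pnorm_le[OF finite_linear_codes p eps this]
  show ?thesis unfolding qm by simp
qed

end
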